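(* Under the hypotheses of the $O(\tau)$ convergence theorem, let $X:[0,\infty)\to\mathbb H$ be the limit of $\underline X_t^\tau$ as $\tau\downarrow0$. Then for all $0\le s\le t$ and all $\xi\in\mathbb H$, \[\frac12\Big(\|X(t)-\xi\|^2_{\mathbb H}-\|X(s)-\xi\|^2_{\mathbb H}\Big)+\frac\lambda2\int_s^t\|X(a)-\xi\|^2_{\mathbb H}\,da+\int_s^t\phi^{\#}_{\rho_0}(X(a))\,da\le(t-s)\,\phi^{\#}_{\rho_0}(\xi).\]
   Context: Hypotheses of the $O(\tau)$ convergence theorem: the standing hypotheses (S) below hold for every $\tau$ in a family $\tau\downarrow0$ (and $|\lambda|\tau<1$ if $\lambda<0$), with $\lim_{\tau\downarrow0}\|X_0^\tau-\mathrm{Id}\|_{\mathbb H}=0$ and $\sup_\tau\|\nabla\phi^{\#}_{\rho_0}(X_0^\tau)\|_{\mathbb H}<\infty$; $\underline X_t^\tau:=X_n^\tau$ for $t\in[n\tau,(n+1)\tau)$, and $\underline X^\tau$ converges locally uniformly in $\mathbb H$ to a locally Lipschitz curve $X$. Standing hypotheses (S): $\rho_0\in\mathcal P_2(\mathbb R^d)$; $\mathbb H=L^2(\mathbb R^d;\rho_0)$ is the Hilbert space of $\rho_0$-square-integrable maps $\mathbb R^d\to\mathbb R^d$; $\phi:\mathcal P_2(\mathbb R^d)\to\mathbb R$ has lift $\phi^{\#}_{\rho_0}(\xi):=\phi(\xi_{\#}\rho_0)$ which is Fréchet differentiable on $\mathbb H$ (gradient $\nabla\phi^{\#}_{\rho_0}$),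 $\lambda$-convex on $\mathbb H$ for some $\lambda\in\mathbb R$, and $\inf_{\mathbb H}\phi^{\#}_{\rho_0}>-\infty$; $\tau>0$ satisfies $\lambda/2+1/\tau>0$. Scheme: $X_{n+1}^\tau$ is the unique minimizer over $\xi\in\mathbb H$ of $\tfrac12\phi^{\#}_{\rho_0}(\xi)+\tfrac12\langle\nabla\phi^{\#}_{\rho_0}(X_n^\tau),\xi\rangle_{\mathbb H}+\tfrac1{2\tau}\|\xi-X_n^\tau\|^2_{\mathbb H}$. *)

theory Defs
  imports "HOL-Probability.Probability"
begin

definition P2 :: "'a::euclidean_space measure set" where
  "P2 = {M. prob_space M \<and> sets M = sets borel \<and> integrable M (\<lambda>x. (norm x)\<^sup>2)}"

text \<open>The Hilbert space H = L^2(R^d; rho0), represented by square integrable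
  Borel maps (elements equal rho0-a.e. are identified by the seminorm).\<close>
definition Hsp :: "'a::euclidean_space measure \<Rightarrow> ('a \<Rightarrow> 'a) set" where
  "Hsp \<rho> = {\<xi>. \<xi> \<in> borel_measurable \<rho> \<and> integrable \<rho> (\<lambda>x. (norm (\<xi> x))\<^sup>2)}"

definition Hinner :: "'a::euclidean_space measure \<Rightarrow> ('a \<Rightarrow> 'a) \<Rightarrow> ('a \<Rightarrow> 'a) \<Rightarrow> real" where
  "Hinner \<rho> \<xi> \<eta> = (\<integral>x. \<xi> x \<bullet> \<eta> x \<partial>\<rho>)"

definition Hnorm :: "'a::euclidean_space measure \<Rightarrow> ('a \<Rightarrow> 'a) \<Rightarrow> real" where
  "Hnorm \<rho> \<xi> = sqrt (\<integral>x. (norm (\<xi> x))\<^sup>2 \<partial>\<rho>)"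

definition lift :: "('a::euclidean_space measure \<Rightarrow> real) \<Rightarrow> 'a measure \<Rightarrow> ('a \<Rightarrow> 'a) \<Rightarrow> real" where
  "lift \<phi> \<rho> \<xi> = \<phi> (distr \<rho> borel \<xi>)"

definition H_frechet_gradient ::
  "'a::euclidean_space measure \<Rightarrow> (('a \<Rightarrow> 'a) \<Rightarrow> real) \<Rightarrow> (('a \<Rightarrow> 'a) \<Rightarrow> ('a \<Rightarrow> 'a)) \<Rightarrow> bool" where
  "H_frechet_gradient \<rho> F G \<longleftrightarrow>
     (\<forall>\<xi>\<in>Hsp \<rho>. G \<xi> \<in> Hsp \<rho> \<and>
        (\<forall>\<epsilon>>0. \<exists>\<delta>>0. \<forall>\<eta>\<in>Hsp \<rho>. Hnorm \<rho> (\<lambda>x. \<eta> x - \<xi> x) < \<delta> \<longrightarrow>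
            \<bar>F \<eta> - F \<xi> - Hinner \<rho> (G \<xi>) (\<lambda>x. \<eta> x - \<xi> x)\<bar>
              \<le> \<epsilon> * Hnorm \<rho> (\<lambda>x. \<eta> x - \<xi> x)))"

definition H_lambda_convex ::
  "'a::euclidean_space measure \<Rightarrow> real \<Rightarrow> (('a \<Rightarrow> 'a) \<Rightarrow> real) \<Rightarrow> bool" where
  "H_lambda_convex \<rho> lam F \<longleftrightarrow>
     (\<forall>\<xi>\<in>Hsp \<rho>. \<forall>\<eta>\<in>Hsp \<rho>. \<forall>t\<in>{0..1::real}.
        F (\<lambda>x. (1 - t) *\<^sub>R \<xi> x + t *\<^sub>R \<eta> x)
          \<le> (1 - t) * F \<xi> + t * F \<eta> - lam / 2 * t * (1 - t) * (Hnorm \<rho> (\<lambda>x. \<xi> x - \<eta> x))\<^sup>2)"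

definition scheme_obj ::
  "'a::euclidean_space measure \<Rightarrow> (('a \<Rightarrow> 'a) \<Rightarrow> real) \<Rightarrow> (('a \<Rightarrow> 'a) \<Rightarrow> ('a \<Rightarrow> 'a)) \<Rightarrow> real
     \<Rightarrow> ('a \<Rightarrow> 'a) \<Rightarrow> ('a \<Rightarrow> 'a) \<Rightarrow> real" where
  "scheme_obj \<rho> F G \<tau> Xn \<xi> =
     F \<xi> / 2 + Hinner \<rho> (G Xn) \<xi> / 2 + (Hnorm \<rho> (\<lambda>x. \<xi> x - Xn x))\<^sup>2 / (2 * \<tau>)"

end

theory Submission
  imports Defs
begin

(*
  Write G for the gradient of the lifted functional F. Minimality of X(n+1) in the scheme gives
  the discrete Euler-Lagrange equation X(n+1) - X(n) = -(tau/2) (G X(n) + G X(n+1)). Averaging the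
  gradient inequalities F(xi) >= F(X) + <G X, xi - X> + lambda/2 |xi - X|^2 at X(n) and X(n+1) and
  inserting this equation gives a one-step discrete EVI whose only defect is the gradient term
  tau^2/8 (|G X(n+1)|^2 - |G X(n)|^2), and this telescopes when the steps are summed. The same
  equation together with the monotonicity of G shows that |G X(n)|^2 grows at most like
  exp(4 |lambda| n tau), so the defect is O(tau^2) on bounded time intervals. The summed inequality
  is a Riemann sum for the integrated EVI; uniform convergence of the scheme to the Lipschitz curve
  X, together with the uniform continuity of F and of |. - xi|^2 near the compact trajectory of X,
  lets it pass to the limit as tau tends to 0.
*)

section \<open>Inner product structure of Hsp\<close>

lemma Hinner_integrable:
  assumes "u \<in> Hsp M" "v \<in> Hsp M"
  shows "integrable M (\<lambda>x. u x \<bullet> v x)"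
proof (rule Bochner_Integration.integrable_bound)
  show "integrable M (\<lambda>x. (norm (u x))\<^sup>2 + (norm (v x))\<^sup>2)"
    using assms by (auto simp: Hsp_def)
  show "AE x in M. norm (u x \<bullet> v x) \<le> norm ((norm (u x))\<^sup>2 + (norm (v x))\<^sup>2)"
  proof (rule AE_I2)
    fix x
    have "\<bar>u x \<bullet> v x\<bar> \<le> norm (u x) * norm (v x)"
      by (rule Cauchy_Schwarz_ineq2)
    also have "\<dots> \<le> (norm (u x))\<^sup>2 + (norm (v x))\<^sup>2"
      using sum_squares_bound[of "norm (u x)" "norm (v x)"]
        mult_nonneg_nonneg[OF norm_ge_zero norm_ge_zero, of "u x" "v x"]
      by linarith
    finally show "norm (u x \<bullet> v x) \<le> norm ((norm (u x))\<^sup>2 + (norm (v x))\<^sup>2)"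
      by simp
  qed
qed (use assms in \<open>auto simp: Hsp_def\<close>)

lemma Hsp_add [simp]:
  assumes "u \<in> Hsp M" "v \<in> Hsp M"
  shows "(\<lambda>x. u x + v x) \<in> Hsp M"
proof -
  have "(\<lambda>x. (norm (u x + v x))\<^sup>2) = (\<lambda>x. u x \<bullet> u x + 2 * (u x \<bullet> v x) + v x \<bullet> v x)"
    by (auto simp: power2_norm_eq_inner inner_add_left inner_add_right inner_commute)
  moreover have "integrable M (\<lambda>x. u x \<bullet> u x + 2 * (u x \<bullet> v x) + v x \<bullet> v x)"
    using assms by (intro Bochner_Integration.integrable_add integrable_mult_right Hinner_integrable)
  ultimately show ?thesis
    using assms by (auto simp: Hsp_def)
qed

lemma Hsp_scaleR [simp]: "u \<in> Hsp M \<Longrightarrow> (\<lambda>x. c *\<^sub>R u x) \<in> Hsp M"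
  by (auto simp: Hsp_def power_mult_distrib)

lemma Hsp_diff [simp]:
  assumes "u \<in> Hsp M" "v \<in> Hsp M"
  shows "(\<lambda>x. u x - v x) \<in> Hsp M"
  using Hsp_add[OF assms(1) Hsp_scaleR[OF assms(2), of "-1"]] by simp

lemma Hinner_commute: "Hinner M u v = Hinner M v u"
  by (simp add: Hinner_def inner_commute)

lemma Hinner_add_left [simp]:
  "u \<in> Hsp M \<Longrightarrow> v \<in> Hsp M \<Longrightarrow> w \<in> Hsp M \<Longrightarrow>
    Hinner M (\<lambda>x. u x + v x) w = Hinner M u w + Hinner M v w"
  by (simp add: Hinner_def inner_add_left Hinner_integrable)

lemma Hinner_diff_left [simp]:
  "u \<in> Hsp M \<Longrightarrow> v \<in> Hsp M \<Longrightarrow> w \<in> Hsp M \<Longrightarrow>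
    Hinner M (\<lambda>x. u x - v x) w = Hinner M u w - Hinner M v w"
  by (simp add: Hinner_def inner_diff_left Hinner_integrable)

lemma Hinner_scaleR_left [simp]: "Hinner M (\<lambda>x. c *\<^sub>R u x) w = c * Hinner M u w"
  by (simp add: Hinner_def)

lemma Hinner_add_right [simp]:
  "u \<in> Hsp M \<Longrightarrow> v \<in> Hsp M \<Longrightarrow> w \<in> Hsp M \<Longrightarrow>
    Hinner M w (\<lambda>x. u x + v x) = Hinner M w u + Hinner M w v"
  by (simp add: Hinner_commute[of M w])

lemma Hinner_diff_right [simp]:
  "u \<in> Hsp M \<Longrightarrow> v \<in> Hsp M \<Longrightarrow> w \<in> Hsp M \<Longrightarrow>
    Hinner M w (\<lambda>x. u x - v x) = Hinner M w u - Hinner M w v"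
  by (simp add: Hinner_commute[of M w])

lemma Hinner_scaleR_right [simp]: "Hinner M w (\<lambda>x. c *\<^sub>R u x) = c * Hinner M w u"
  by (simp add: Hinner_commute[of M w])

lemma Hinner_self_nonneg: "0 \<le> Hinner M u u"
  by (simp add: Hinner_def)

lemma Hnorm_nonneg: "0 \<le> Hnorm M u"
  by (simp add: Hnorm_def)

lemma Hnorm_power2: "(Hnorm M u)\<^sup>2 = Hinner M u u"
  by (simp add: Hnorm_def Hinner_def power2_norm_eq_inner)

lemma Hnorm_minus_commute: "Hnorm M (\<lambda>x. u x - v x) = Hnorm M (\<lambda>x. v x - u x)"
  by (simp add: Hnorm_def norm_minus_commute)

lemma Hnorm_scaleR: "Hnorm M (\<lambda>x. c *\<^sub>R u x) = \<bar>c\<bar> * Hnorm M u"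
  by (simp add: Hnorm_def power_mult_distrib real_sqrt_mult)

lemma discriminant_le_of_quadratic_nonneg:
  fixes A B C :: real
  assumes nonneg: "\<And>t. 0 \<le> A - 2 * t * B + t\<^sup>2 * C" and "0 \<le> C"
  shows "B\<^sup>2 \<le> A * C"
proof (cases "C = 0")
  case True
  have "B = 0"
    using nonneg[of "(A + 1) / (2 * B)"] True by (cases "B = 0") (auto simp: field_simps)
  then show ?thesis
    using nonneg[of 0] True by simp
next
  case False
  with \<open>0 \<le> C\<close> have "0 \<le> A - B\<^sup>2 / C"
    using nonneg[of "B / C"] by (simp add: power2_eq_square field_simps)
  with \<open>0 \<le> C\<close> False show ?thesis
    by (simp add: field_simps)
qed

lemma Hinner_Cauchy_Schwarz:
  assumes "u \<in> Hsp M" "v \<in> Hsp M"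
  shows "\<bar>Hinner M u v\<bar> \<le> Hnorm M u * Hnorm M v"
proof -
  have "0 \<le> Hinner M u u - 2 * t * Hinner M u v + t\<^sup>2 * Hinner M v v" for t
  proof -
    have "0 \<le> Hinner M (\<lambda>x. u x - t *\<^sub>R v x) (\<lambda>x. u x - t *\<^sub>R v x)"
      by (rule Hinner_self_nonneg)
    also have "\<dots> = Hinner M u u - 2 * t * Hinner M u v + t\<^sup>2 * Hinner M v v"
      using assms by (simp add: Hinner_commute[of M v u] power2_eq_square algebra_simps)
    finally show ?thesis .
  qed
  then have "(Hinner M u v)\<^sup>2 \<le> Hinner M u u * Hinner M v v"
    using Hinner_self_nonneg by (rule discriminant_le_of_quadratic_nonneg)
  also have "\<dots> = (Hnorm M u * Hnorm M v)\<^sup>2"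
    by (simp add: Hnorm_power2 power_mult_distrib)
  finally have "\<bar>Hinner M u v\<bar>\<^sup>2 \<le> (Hnorm M u * Hnorm M v)\<^sup>2"
    by simp
  then show ?thesis
    by (rule power2_le_imp_le) (simp add: Hnorm_nonneg)
qed

lemma Hnorm_add_le:
  assumes "u \<in> Hsp M" "v \<in> Hsp M"
  shows "Hnorm M (\<lambda>x. u x + v x) \<le> Hnorm M u + Hnorm M v"
proof -
  have "(Hnorm M (\<lambda>x. u x + v x))\<^sup>2 = (Hnorm M u)\<^sup>2 + 2 * Hinner M u v + (Hnorm M v)\<^sup>2"
    using assms by (simp add: Hnorm_power2 Hinner_commute[of M v u])
  also have "\<dots> \<le> (Hnorm M u + Hnorm M v)\<^sup>2"
    using Hinner_Cauchy_Schwarz[OF assms] by (simp add: power2_sum)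
  finally show ?thesis
    by (rule power2_le_imp_le) (simp add: Hnorm_nonneg)
qed

lemma Hnorm_triangle:
  assumes "u \<in> Hsp M" "v \<in> Hsp M" "w \<in> Hsp M"
  shows "Hnorm M (\<lambda>x. u x - w x) \<le> Hnorm M (\<lambda>x. u x - v x) + Hnorm M (\<lambda>x. v x - w x)"
proof -
  have "(\<lambda>x. u x - w x) = (\<lambda>x. (u x - v x) + (v x - w x))"
    by simp
  then show ?thesis
    using Hnorm_add_le[of "\<lambda>x. u x - v x" M "\<lambda>x. v x - w x"] assms by simp
qed

section \<open>Gradient inequality and one step of the scheme\<close>

lemma H_frechet_gradient_in_Hsp: "H_frechet_gradient M F G \<Longrightarrow> u \<in> Hsp M \<Longrightarrow> G u \<in> Hsp M"
  by (simp add: H_frechet_gradient_def)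

lemma H_frechet_gradient_directional_derivative:
  assumes grad: "H_frechet_gradient M F G" and u: "u \<in> Hsp M" and h: "h \<in> Hsp M"
  shows "((\<lambda>r. F (\<lambda>x. u x + r *\<^sub>R h x)) has_real_derivative Hinner M (G u) h) (at 0)"
  unfolding has_field_derivative_iff LIM_eq
proof (intro allI impI)
  fix e :: real
  assume "0 < e"
  define \<epsilon> where "\<epsilon> = e / (Hnorm M h + 1)"
  have "0 < \<epsilon>" and \<epsilon>_h: "\<epsilon> * Hnorm M h < e"
    using \<open>0 < e\<close> Hnorm_nonneg[of M h] by (simp_all add: \<epsilon>_def field_simps)
  then obtain \<delta> where "0 < \<delta>" and \<delta>: "\<And>\<eta>. \<eta> \<in> Hsp M \<Longrightarrow> Hnorm M (\<lambda>x. \<eta> x - u x) < \<delta> \<Longrightarrow>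
      \<bar>F \<eta> - F u - Hinner M (G u) (\<lambda>x. \<eta> x - u x)\<bar> \<le> \<epsilon> * Hnorm M (\<lambda>x. \<eta> x - u x)"
    using grad u unfolding H_frechet_gradient_def by meson
  show "\<exists>s>0. \<forall>r. r \<noteq> 0 \<and> norm (r - 0) < s \<longrightarrow>
      norm ((F (\<lambda>x. u x + r *\<^sub>R h x) - F (\<lambda>x. u x + 0 *\<^sub>R h x)) / (r - 0) - Hinner M (G u) h) < e"
  proof (intro exI[of _ "\<delta> / (Hnorm M h + 1)"] conjI allI impI)
    show "0 < \<delta> / (Hnorm M h + 1)"
      using \<open>0 < \<delta>\<close> Hnorm_nonneg[of M h] by simp
    fix r :: real
    assume r: "r \<noteq> 0 \<and> norm (r - 0) < \<delta> / (Hnorm M h + 1)"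
    have step: "(\<lambda>x. u x + r *\<^sub>R h x - u x) = (\<lambda>x. r *\<^sub>R h x)"
      by simp
    have "\<bar>r\<bar> * Hnorm M h < \<delta>"
      using r Hnorm_nonneg[of M h] \<open>0 < \<delta>\<close>
      by (simp add: field_simps) (smt (verit) mult_left_mono abs_ge_zero)
    then have "\<bar>F (\<lambda>x. u x + r *\<^sub>R h x) - F u - r * Hinner M (G u) h\<bar> \<le> \<epsilon> * (\<bar>r\<bar> * Hnorm M h)"
      using \<delta>[of "\<lambda>x. u x + r *\<^sub>R h x"] u h by (simp add: step Hnorm_scaleR)
    then have "\<bar>(F (\<lambda>x. u x + r *\<^sub>R h x) - F u) / r - Hinner M (G u) h\<bar> \<le> \<epsilon> * Hnorm M h"
      using r by (simp add: field_simps abs_divide abs_mult mult.commute mult.left_commute)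
    then show "norm ((F (\<lambda>x. u x + r *\<^sub>R h x) - F (\<lambda>x. u x + 0 *\<^sub>R h x)) / (r - 0)
        - Hinner M (G u) h) < e"
      using \<epsilon>_h by simp
  qed
qed

lemma H_lambda_convex_gradient_inequality:
  assumes grad: "H_frechet_gradient M F G" and convex: "H_lambda_convex M lam F"
    and u: "u \<in> Hsp M" and w: "w \<in> Hsp M"
  shows "F u + Hinner M (G u) (\<lambda>x. w x - u x) + lam / 2 * (Hnorm M (\<lambda>x. w x - u x))\<^sup>2 \<le> F w"
proof -
  define h where "h = (\<lambda>x. w x - u x)"
  define \<phi> where "\<phi> r = F (\<lambda>x. u x + r *\<^sub>R h x)" for r
  have h: "h \<in> Hsp M"
    using u w by (simp add: h_def)
  have "((\<lambda>r. (\<phi> r - \<phi> 0) / (r - 0)) \<longlongrightarrow> Hinner M (G u) h) (at_right 0)"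
    using H_frechet_gradient_directional_derivative[OF grad u h]
    unfolding \<phi>_def has_field_derivative_iff by (rule tendsto_mono[OF at_le, rotated]) simp
  moreover have "((\<lambda>r. F w - F u - lam / 2 * (1 - r) * (Hnorm M h)\<^sup>2)
      \<longlongrightarrow> F w - F u - lam / 2 * (1 - 0) * (Hnorm M h)\<^sup>2) (at_right 0)"
    by (intro tendsto_intros)
  moreover have "\<forall>\<^sub>F r in at_right 0. (\<phi> r - \<phi> 0) / (r - 0) \<le> F w - F u - lam / 2 * (1 - r) * (Hnorm M h)\<^sup>2"
    unfolding eventually_at_right_field
  proof (intro exI[of _ 1] conjI allI impI)
    fix r :: real
    assume "0 < r" and "r < 1"
    have "F (\<lambda>x. (1 - r) *\<^sub>R u x + r *\<^sub>R w x)
        \<le> (1 - r) * F u + r * F w - lam / 2 * r * (1 - r) * (Hnorm M (\<lambda>x. u x - w x))\<^sup>2"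
      using convex u w \<open>0 < r\<close> \<open>r < 1\<close> unfolding H_lambda_convex_def by simp
    moreover have "(\<lambda>x. (1 - r) *\<^sub>R u x + r *\<^sub>R w x) = (\<lambda>x. u x + r *\<^sub>R h x)"
      by (simp add: h_def algebra_simps)
    moreover have "Hnorm M (\<lambda>x. u x - w x) = Hnorm M h"
      unfolding h_def by (rule Hnorm_minus_commute)
    ultimately have "\<phi> r - \<phi> 0 \<le> r * (F w - F u - lam / 2 * (1 - r) * (Hnorm M h)\<^sup>2)"
      by (simp add: \<phi>_def algebra_simps)
    with \<open>0 < r\<close> show "(\<phi> r - \<phi> 0) / (r - 0) \<le> F w - F u - lam / 2 * (1 - r) * (Hnorm M h)\<^sup>2"
      by (simp add: pos_divide_le_eq mult.commute)
  qed simp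
  ultimately have "Hinner M (G u) h \<le> F w - F u - lam / 2 * (Hnorm M h)\<^sup>2"
    by (intro tendsto_le[OF trivial_limit_at_right_real]) simp_all
  then show ?thesis
    by (simp add: h_def)
qed

lemma scheme_obj_Euler_Lagrange:
  assumes grad: "H_frechet_gradient M F G" and "0 < \<tau>"
    and x: "x \<in> Hsp M" and y: "y \<in> Hsp M" and v: "v \<in> Hsp M"
    and min: "\<forall>\<xi>\<in>Hsp M. scheme_obj M F G \<tau> x y \<le> scheme_obj M F G \<tau> x \<xi>"
  shows "Hinner M (\<lambda>z. y z - x z) v = - \<tau> / 2 * Hinner M (\<lambda>z. G x z + G y z) v"
proof -
  define d where "d = (\<lambda>z. y z - x z)"
  define c where "c = Hinner M (G x) v / 2 + Hinner M d v / \<tau>"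
  define \<psi> where "\<psi> r = scheme_obj M F G \<tau> x (\<lambda>z. y z + r *\<^sub>R v z)" for r
  have d: "d \<in> Hsp M"
    using x y by (simp add: d_def)
  have Gx: "G x \<in> Hsp M"
    using grad x by (rule H_frechet_gradient_in_Hsp)
  have "\<psi> = (\<lambda>r. F (\<lambda>z. y z + r *\<^sub>R v z) / 2 + r * c
      + (Hinner M (G x) y / 2 + (Hnorm M d)\<^sup>2 / (2 * \<tau>)) + r\<^sup>2 * (Hnorm M v)\<^sup>2 / (2 * \<tau>))"
  proof
    fix r
    have "(\<lambda>z. y z + r *\<^sub>R v z - x z) = (\<lambda>z. d z + r *\<^sub>R v z)"
      by (simp add: d_def algebra_simps)
    then have sq: "(Hnorm M (\<lambda>z. y z + r *\<^sub>R v z - x z))\<^sup>2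
        = (Hnorm M d)\<^sup>2 + 2 * r * Hinner M d v + r\<^sup>2 * (Hnorm M v)\<^sup>2"
      using d v by (simp add: Hnorm_power2 Hinner_commute[of M v d] power2_eq_square[of r] algebra_simps)
    show "\<psi> r = F (\<lambda>z. y z + r *\<^sub>R v z) / 2 + r * c
        + (Hinner M (G x) y / 2 + (Hnorm M d)\<^sup>2 / (2 * \<tau>)) + r\<^sup>2 * (Hnorm M v)\<^sup>2 / (2 * \<tau>)"
      unfolding \<psi>_def scheme_obj_def sq using y v Gx \<open>0 < \<tau>\<close>
      by (simp add: c_def field_simps)
  qed
  then have "(\<psi> has_real_derivative Hinner M (G y) v / 2 + c) (at 0)"
    using H_frechet_gradient_directional_derivative[OF grad y v] \<open>0 < \<tau>\<close>
    by (auto intro!: derivative_eq_intros)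
  moreover have "\<psi> 0 \<le> \<psi> r" for r
    using min y v unfolding \<psi>_def by simp
  ultimately have "Hinner M (G y) v / 2 + c = 0"
    by (intro DERIV_local_min[of _ _ 0 1]) auto
  then show ?thesis
    using v Gx H_frechet_gradient_in_Hsp[OF grad y] \<open>0 < \<tau>\<close>
    by (simp add: c_def d_def field_simps)
qed

lemma scheme_step_energy_identity:
  assumes grad: "H_frechet_gradient M F G" and "0 < \<tau>"
    and x: "x \<in> Hsp M" and y: "y \<in> Hsp M" and \<xi>: "\<xi> \<in> Hsp M"
    and min: "\<forall>\<xi>\<in>Hsp M. scheme_obj M F G \<tau> x y \<le> scheme_obj M F G \<tau> x \<xi>"
  shows "((Hnorm M (\<lambda>z. y z - \<xi> z))\<^sup>2 - (Hnorm M (\<lambda>z. x z - \<xi> z))\<^sup>2) / (2 * \<tau>)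
      + \<tau> / 8 * ((Hnorm M (G y))\<^sup>2 - (Hnorm M (G x))\<^sup>2)
    = - (Hinner M (G y) (\<lambda>z. y z - \<xi> z) + Hinner M (G x) (\<lambda>z. x z - \<xi> z)) / 2"
proof -
  define a where "a = (\<lambda>z. y z - \<xi> z)"
  define b where "b = (\<lambda>z. x z - \<xi> z)"
  define gx where "gx = G x"
  define gy where "gy = G y"
  have H: "a \<in> Hsp M" "b \<in> Hsp M" "gx \<in> Hsp M" "gy \<in> Hsp M"
    using x y \<xi> H_frechet_gradient_in_Hsp[OF grad] by (simp_all add: a_def b_def gx_def gy_def)
  have "(\<lambda>z. y z - x z) = (\<lambda>z. a z - b z)"
    by (simp add: a_def b_def)
  then have el: "Hinner M (\<lambda>z. a z - b z) v = - \<tau> / 2 * Hinner M (\<lambda>z. gx z + gy z) v" if "v \<in> Hsp M" for v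
    using scheme_obj_Euler_Lagrange[OF grad \<open>0 < \<tau>\<close> x y that min] by (simp add: gx_def gy_def)
  define A where "A = Hinner M (\<lambda>z. gx z + gy z) (\<lambda>z. a z + b z)"
  define C where "C = Hinner M (\<lambda>z. a z - b z) (\<lambda>z. gy z - gx z)"
  have "(Hnorm M a)\<^sup>2 - (Hnorm M b)\<^sup>2 = Hinner M (\<lambda>z. a z - b z) (\<lambda>z. a z + b z)"
    using H by (simp add: Hnorm_power2 Hinner_commute)
  also have "\<dots> = - \<tau> / 2 * A"
    unfolding A_def by (rule el) (simp add: H)
  finally have "((Hnorm M a)\<^sup>2 - (Hnorm M b)\<^sup>2) / (2 * \<tau>) = - A / 4"
    using \<open>0 < \<tau>\<close> by simp
  moreover have "(Hnorm M gy)\<^sup>2 - (Hnorm M gx)\<^sup>2 = Hinner M (\<lambda>z. gx z + gy z) (\<lambda>z. gy z - gx z)"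
    using H by (simp add: Hnorm_power2 Hinner_commute)
  then have "\<tau> * ((Hnorm M gy)\<^sup>2 - (Hnorm M gx)\<^sup>2) = - 2 * C"
    unfolding C_def el[OF Hsp_diff[OF H(4,3)]] by simp
  then have "\<tau> / 8 * ((Hnorm M gy)\<^sup>2 - (Hnorm M gx)\<^sup>2) = - C / 4"
    by simp
  moreover have "A + C = 2 * Hinner M gy a + 2 * Hinner M gx b"
    using H by (simp add: A_def C_def Hinner_commute)
  ultimately show ?thesis
    unfolding a_def[symmetric] b_def[symmetric] gx_def[symmetric] gy_def[symmetric] by simp
qed

lemma scheme_step_evi:
  assumes grad: "H_frechet_gradient M F G" and convex: "H_lambda_convex M lam F" and "0 < \<tau>"
    and x: "x \<in> Hsp M" and y: "y \<in> Hsp M" and \<xi>: "\<xi> \<in> Hsp M"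
    and min: "\<forall>\<xi>\<in>Hsp M. scheme_obj M F G \<tau> x y \<le> scheme_obj M F G \<tau> x \<xi>"
  shows "((Hnorm M (\<lambda>z. y z - \<xi> z))\<^sup>2 - (Hnorm M (\<lambda>z. x z - \<xi> z))\<^sup>2) / (2 * \<tau>)
      + (F x + F y) / 2 + lam / 4 * ((Hnorm M (\<lambda>z. x z - \<xi> z))\<^sup>2 + (Hnorm M (\<lambda>z. y z - \<xi> z))\<^sup>2)
      + \<tau> / 8 * ((Hnorm M (G y))\<^sup>2 - (Hnorm M (G x))\<^sup>2) \<le> F \<xi>"
proof -
  have "F y - Hinner M (G y) (\<lambda>z. y z - \<xi> z) + lam / 2 * (Hnorm M (\<lambda>z. y z - \<xi> z))\<^sup>2 \<le> F \<xi>"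
    using H_lambda_convex_gradient_inequality[OF grad convex y \<xi>] y \<xi> H_frechet_gradient_in_Hsp[OF grad y]
    by (simp add: Hnorm_minus_commute[of M \<xi>])
  moreover have "F x - Hinner M (G x) (\<lambda>z. x z - \<xi> z) + lam / 2 * (Hnorm M (\<lambda>z. x z - \<xi> z))\<^sup>2 \<le> F \<xi>"
    using H_lambda_convex_gradient_inequality[OF grad convex x \<xi>] x \<xi> H_frechet_gradient_in_Hsp[OF grad x]
    by (simp add: Hnorm_minus_commute[of M \<xi>])
  ultimately show ?thesis
    using scheme_step_energy_identity[OF grad \<open>0 < \<tau>\<close> x y \<xi> min] by argo
qed

lemma H_lambda_convex_gradient_monotone:
  assumes grad: "H_frechet_gradient M F G" and convex: "H_lambda_convex M lam F"
    and x: "x \<in> Hsp M" and y: "y \<in> Hsp M"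
  shows "lam * (Hnorm M (\<lambda>z. y z - x z))\<^sup>2 \<le> Hinner M (\<lambda>z. y z - x z) (\<lambda>z. G y z - G x z)"
proof -
  have "F x + Hinner M (G x) (\<lambda>z. y z - x z) + lam / 2 * (Hnorm M (\<lambda>z. y z - x z))\<^sup>2 \<le> F y"
    using H_lambda_convex_gradient_inequality[OF grad convex x y] .
  moreover have "F y - Hinner M (G y) (\<lambda>z. y z - x z) + lam / 2 * (Hnorm M (\<lambda>z. y z - x z))\<^sup>2 \<le> F x"
    using H_lambda_convex_gradient_inequality[OF grad convex y x] x y H_frechet_gradient_in_Hsp[OF grad y]
    by (simp add: Hnorm_minus_commute[of M x])
  ultimately show ?thesis
    using x y H_frechet_gradient_in_Hsp[OF grad] by (simp add: Hinner_commute)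
qed

lemma scheme_step_displacement:
  assumes grad: "H_frechet_gradient M F G" and "0 < \<tau>"
    and x: "x \<in> Hsp M" and y: "y \<in> Hsp M"
    and min: "\<forall>\<xi>\<in>Hsp M. scheme_obj M F G \<tau> x y \<le> scheme_obj M F G \<tau> x \<xi>"
  shows "Hnorm M (\<lambda>z. y z - x z) \<le> \<tau> / 2 * (Hnorm M (G x) + Hnorm M (G y))"
proof -
  define d where "d = (\<lambda>z. y z - x z)"
  define g where "g = (\<lambda>z. G x z + G y z)"
  have H: "d \<in> Hsp M" "g \<in> Hsp M"
    using x y H_frechet_gradient_in_Hsp[OF grad] by (simp_all add: d_def g_def)
  have "(Hnorm M d)\<^sup>2 = - \<tau> / 2 * Hinner M g d"
    using scheme_obj_Euler_Lagrange[OF grad \<open>0 < \<tau>\<close> x y H(1) min] by (simp add: d_def g_def Hnorm_power2)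
  also have "\<dots> \<le> \<tau> / 2 * (Hnorm M g * Hnorm M d)"
    using mult_left_mono[OF abs_le_D2[OF Hinner_Cauchy_Schwarz[OF H(2,1)]], of "\<tau> / 2"] \<open>0 < \<tau>\<close> by simp
  finally have "Hnorm M d \<le> \<tau> / 2 * Hnorm M g"
    using Hnorm_nonneg[of M d] Hnorm_nonneg[of M g] \<open>0 < \<tau>\<close>
    by (cases "Hnorm M d = 0") (simp_all add: power2_eq_square)
  also have "\<dots> \<le> \<tau> / 2 * (Hnorm M (G x) + Hnorm M (G y))"
    using Hnorm_add_le[OF H_frechet_gradient_in_Hsp[OF grad x] H_frechet_gradient_in_Hsp[OF grad y]]
      \<open>0 < \<tau>\<close>
    by (simp add: g_def)
  finally show ?thesis
    by (simp add: d_def)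
qed

lemma scheme_step_gradient_growth:
  assumes grad: "H_frechet_gradient M F G" and convex: "H_lambda_convex M lam F" and "0 < \<tau>"
    and x: "x \<in> Hsp M" and y: "y \<in> Hsp M"
    and min: "\<forall>\<xi>\<in>Hsp M. scheme_obj M F G \<tau> x y \<le> scheme_obj M F G \<tau> x \<xi>"
  shows "(Hnorm M (G y))\<^sup>2 - (Hnorm M (G x))\<^sup>2 \<le> \<bar>lam\<bar> * \<tau> * ((Hnorm M (G x))\<^sup>2 + (Hnorm M (G y))\<^sup>2)"
proof -
  define d where "d = (\<lambda>z. y z - x z)"
  define gx where "gx = G x"
  define gy where "gy = G y"
  have H: "d \<in> Hsp M" "gx \<in> Hsp M" "gy \<in> Hsp M"
    using x y H_frechet_gradient_in_Hsp[OF grad] by (simp_all add: d_def gx_def gy_def)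
  have "(Hnorm M d)\<^sup>2 \<le> (\<tau> / 2)\<^sup>2 * (Hnorm M gx + Hnorm M gy)\<^sup>2"
    using scheme_step_displacement[OF grad \<open>0 < \<tau>\<close> x y min]
    by (simp add: d_def gx_def gy_def power_mono Hnorm_nonneg flip: power_mult_distrib)
  also have "\<dots> \<le> (\<tau> / 2)\<^sup>2 * (2 * ((Hnorm M gx)\<^sup>2 + (Hnorm M gy)\<^sup>2))"
    using sum_squares_bound[of "Hnorm M gx" "Hnorm M gy"]
    by (intro mult_left_mono) (simp_all add: power2_sum)
  finally have d_bound: "2 * (Hnorm M d)\<^sup>2 \<le> \<tau> * (\<tau> * ((Hnorm M gx)\<^sup>2 + (Hnorm M gy)\<^sup>2))"
    by (simp add: power2_eq_square algebra_simps)
  have "\<tau> * ((Hnorm M gy)\<^sup>2 - (Hnorm M gx)\<^sup>2) = \<tau> * Hinner M (\<lambda>z. gx z + gy z) (\<lambda>z. gy z - gx z)"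
    using H by (simp add: Hnorm_power2 Hinner_commute)
  also have "\<dots> = - 2 * Hinner M d (\<lambda>z. gy z - gx z)"
    using scheme_obj_Euler_Lagrange[OF grad \<open>0 < \<tau>\<close> x y Hsp_diff[OF H(3,2)] min]
    by (simp add: d_def gx_def gy_def)
  also have "\<dots> \<le> 2 * (\<bar>lam\<bar> * (Hnorm M d)\<^sup>2)"
    using H_lambda_convex_gradient_monotone[OF grad convex x y]
      mult_right_mono[OF abs_ge_minus_self[of lam] zero_le_power2[of "Hnorm M d"]]
    by (simp add: d_def gx_def gy_def)
  also have "\<dots> \<le> \<tau> * (\<bar>lam\<bar> * \<tau> * ((Hnorm M gx)\<^sup>2 + (Hnorm M gy)\<^sup>2))"
    using mult_left_mono[OF d_bound, of "\<bar>lam\<bar>"] by (simp add: algebra_simps)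
  finally show ?thesis
    using \<open>0 < \<tau>\<close> by (simp add: gx_def gy_def)
qed

lemma exp_bound_of_growth:
  fixes b :: "nat \<Rightarrow> real"
  assumes growth: "\<And>n. b (Suc n) - b n \<le> c * (b n + b (Suc n))"
    and "0 \<le> c" "c \<le> 1 / 2" "\<And>n. 0 \<le> b n"
  shows "b n \<le> exp (4 * c * real n) * b 0"
proof (induction n)
  case (Suc n)
  have "b (Suc n) * (1 - c) \<le> b n * (1 + c)"
    using growth[of n] by (simp add: algebra_simps)
  also have "\<dots> \<le> b n * ((1 + 4 * c) * (1 - c))"
    using \<open>0 \<le> c\<close> \<open>c \<le> 1 / 2\<close> \<open>0 \<le> b n\<close> mult_left_mono[of "2 * c" 1 c]
    by (intro mult_left_mono) (auto simp: algebra_simps)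
  finally have "b (Suc n) \<le> (1 + 4 * c) * b n"
    using \<open>c \<le> 1 / 2\<close> by (simp add: mult.commute mult.left_commute)
  also have "\<dots> \<le> exp (4 * c) * (exp (4 * c * real n) * b 0)"
    using Suc.IH \<open>0 \<le> b n\<close> exp_ge_add_one_self[of "4 * c"] by (intro mult_mono) auto
  finally show ?case
    by (simp add: algebra_simps flip: exp_add)
qed simp

section \<open>Riemann sums on a grid\<close>

lemma floor_grid_bounds:
  fixes t \<tau> :: real
  assumes "0 \<le> t" "0 < \<tau>"
  shows "real (nat \<lfloor>t / \<tau>\<rfloor>) * \<tau> \<le> t" "t < real (nat \<lfloor>t / \<tau>\<rfloor>) * \<tau> + \<tau>"
proof -
  have "real (nat \<lfloor>t / \<tau>\<rfloor>) = of_int \<lfloor>t / \<tau>\<rfloor>"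
    using assms by simp
  with floor_correct[of "t / \<tau>"] \<open>0 < \<tau>\<close>
  show "real (nat \<lfloor>t / \<tau>\<rfloor>) * \<tau> \<le> t" "t < real (nat \<lfloor>t / \<tau>\<rfloor>) * \<tau> + \<tau>"
    by (simp_all only: pos_le_divide_eq pos_divide_less_eq) (simp_all add: algebra_simps)
qed

lemma tendsto_floor_grid: "0 \<le> t \<Longrightarrow> ((\<lambda>\<tau>. real (nat \<lfloor>t / \<tau>\<rfloor>) * \<tau>) \<longlongrightarrow> t) (at_right 0)"
proof (rule tendsto_sandwich[of "\<lambda>\<tau>. t - \<tau>" _ _ "\<lambda>_. t"])
  assume "0 \<le> t"
  then show "\<forall>\<^sub>F \<tau> in at_right 0. t - \<tau> \<le> real (nat \<lfloor>t / \<tau>\<rfloor>) * \<tau>"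
      "\<forall>\<^sub>F \<tau> in at_right 0. real (nat \<lfloor>t / \<tau>\<rfloor>) * \<tau> \<le> t"
    using floor_grid_bounds eventually_at_right_less[of 0]
    by (auto elim!: eventually_mono simp: algebra_simps less_imp_le)
  show "((\<lambda>\<tau>. t - \<tau>) \<longlongrightarrow> t) (at_right 0)"
    using tendsto_diff[OF tendsto_const tendsto_ident_at, of t 0 "{0<..}"] by simp
qed simp

lemma integral_grid_riemann_sum:
  fixes f :: "real \<Rightarrow> real" and g :: "nat \<Rightarrow> real"
  assumes "0 < \<tau>" "m \<le> k"
    and "f integrable_on {real m * \<tau>..real k * \<tau>}"
    and "\<And>n a. m \<le> n \<Longrightarrow> n < k \<Longrightarrow> a \<in> {real n * \<tau>..real (Suc n) * \<tau>} \<Longrightarrow> \<bar>f a - g n\<bar> \<le> \<epsilon>"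
  shows "\<bar>integral {real m * \<tau>..real k * \<tau>} f - \<tau> * (\<Sum>n = m..<k. g n)\<bar> \<le> (real k - real m) * \<tau> * \<epsilon>"
  using assms(2-)
proof (induction k rule: dec_induct)
  case (step k)
  have grid: "real m * \<tau> \<le> real k * \<tau>" "real k * \<tau> \<le> real (Suc k) * \<tau>"
    using step.hyps \<open>0 < \<tau>\<close> by simp_all
  have "f integrable_on {real m * \<tau>..real k * \<tau>}"
    by (rule integrable_subinterval_real[OF step.prems(1)]) (use grid in auto)
  then have IH: "\<bar>integral {real m * \<tau>..real k * \<tau>} f - \<tau> * (\<Sum>n = m..<k. g n)\<bar> \<le> (real k - real m) * \<tau> * \<epsilon>"
    using step.IH step.prems(2) by simp
  have "f integrable_on {real k * \<tau>..real (Suc k) * \<tau>}"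
    by (rule integrable_subinterval_real[OF step.prems(1)]) (use grid in auto)
  then have "((\<lambda>a. f a - g k) has_integral integral {real k * \<tau>..real (Suc k) * \<tau>} f
      - Henstock_Kurzweil_Integration.content {real k * \<tau>..real (Suc k) * \<tau>} *\<^sub>R g k)
      {real k * \<tau>..real (Suc k) * \<tau>}"
    by (rule has_integral_diff[OF integrable_integral has_integral_const_real])
  moreover have "0 \<le> \<epsilon>"
    using step.prems(2)[of k "real k * \<tau>"] step.hyps grid by fastforce
  ultimately have "norm (integral {real k * \<tau>..real (Suc k) * \<tau>} f
      - Henstock_Kurzweil_Integration.content {real k * \<tau>..real (Suc k) * \<tau>} *\<^sub>R g k)
      \<le> \<epsilon> * Henstock_Kurzweil_Integration.content {real k * \<tau>..real (Suc k) * \<tau>}"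
    using step.prems(2) step.hyps by (intro has_integral_bound_real[of _ "{}"]) auto
  moreover have "Henstock_Kurzweil_Integration.content {real k * \<tau>..real (Suc k) * \<tau>} = \<tau>"
    using grid by (simp add: algebra_simps)
  ultimately have last: "\<bar>integral {real k * \<tau>..real (Suc k) * \<tau>} f - \<tau> * g k\<bar> \<le> \<epsilon> * \<tau>"
    by simp
  have "integral {real m * \<tau>..real (Suc k) * \<tau>} f - \<tau> * (\<Sum>n = m..<Suc k. g n)
      = (integral {real m * \<tau>..real k * \<tau>} f - \<tau> * (\<Sum>n = m..<k. g n))
        + (integral {real k * \<tau>..real (Suc k) * \<tau>} f - \<tau> * g k)"
    using Henstock_Kurzweil_Integration.integral_combine[OF grid step.prems(1)] step.hyps
    by (simp add: algebra_simps)
  also have "\<bar>\<dots>\<bar> \<le> (real k - real m) * \<tau> * \<epsilon> + \<epsilon> * \<tau>"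
    using IH last by (rule abs_triangle_ineq[THEN order_trans, OF add_mono])
  also have "\<dots> = (real (Suc k) - real m) * \<tau> * \<epsilon>"
    by (simp add: algebra_simps)
  finally show ?case .
qed simp

section \<open>Continuity along curves in Hsp\<close>

definition H_continuous_at :: "'a::euclidean_space measure \<Rightarrow> (('a \<Rightarrow> 'a) \<Rightarrow> real) \<Rightarrow> ('a \<Rightarrow> 'a) \<Rightarrow> bool" where
  "H_continuous_at M f u \<longleftrightarrow>
     (\<forall>e>0. \<exists>d>0. \<forall>\<eta>\<in>Hsp M. Hnorm M (\<lambda>x. \<eta> x - u x) < d \<longrightarrow> \<bar>f \<eta> - f u\<bar> < e)"

lemma H_continuous_atI:
  assumes "\<And>e. 0 < e \<Longrightarrow> \<exists>d>0. \<forall>\<eta>\<in>Hsp M. Hnorm M (\<lambda>x. \<eta> x - u x) < d \<longrightarrow> \<bar>f \<eta> - f u\<bar> \<le> e"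
  shows "H_continuous_at M f u"
  unfolding H_continuous_at_def
proof (intro allI impI)
  fix e :: real
  assume "0 < e"
  then obtain d where "0 < d" and d: "\<forall>\<eta>\<in>Hsp M. Hnorm M (\<lambda>x. \<eta> x - u x) < d \<longrightarrow> \<bar>f \<eta> - f u\<bar> \<le> e / 2"
    using assms[of "e / 2"] by auto
  show "\<exists>d>0. \<forall>\<eta>\<in>Hsp M. Hnorm M (\<lambda>x. \<eta> x - u x) < d \<longrightarrow> \<bar>f \<eta> - f u\<bar> < e"
  proof (intro exI[of _ d] conjI ballI impI)
    fix \<eta>
    assume "\<eta> \<in> Hsp M" "Hnorm M (\<lambda>x. \<eta> x - u x) < d"
    with d \<open>0 < e\<close> show "\<bar>f \<eta> - f u\<bar> < e"
      by fastforce
  qed (fact \<open>0 < d\<close>)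
qed

lemma H_continuous_at_add:
  assumes f: "H_continuous_at M f u" and g: "H_continuous_at M g u"
  shows "H_continuous_at M (\<lambda>\<eta>. f \<eta> + g \<eta>) u"
proof (rule H_continuous_atI)
  fix e :: real
  assume "0 < e"
  then have "0 < e / 2"
    by simp
  then obtain d1 d2 where "0 < d1" "0 < d2"
    and d1: "\<forall>\<eta>\<in>Hsp M. Hnorm M (\<lambda>x. \<eta> x - u x) < d1 \<longrightarrow> \<bar>f \<eta> - f u\<bar> < e / 2"
    and d2: "\<forall>\<eta>\<in>Hsp M. Hnorm M (\<lambda>x. \<eta> x - u x) < d2 \<longrightarrow> \<bar>g \<eta> - g u\<bar> < e / 2"
    using f g unfolding H_continuous_at_def by blast
  show "\<exists>d>0. \<forall>\<eta>\<in>Hsp M. Hnorm M (\<lambda>x. \<eta> x - u x) < d \<longrightarrow> \<bar>f \<eta> + g \<eta> - (f u + g u)\<bar> \<le> e"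
  proof (intro exI[of _ "min d1 d2"] conjI ballI impI)
    fix \<eta>
    assume "\<eta> \<in> Hsp M" "Hnorm M (\<lambda>x. \<eta> x - u x) < min d1 d2"
    with d1 d2 have "\<bar>f \<eta> - f u\<bar> < e / 2" "\<bar>g \<eta> - g u\<bar> < e / 2"
      by simp_all
    then show "\<bar>f \<eta> + g \<eta> - (f u + g u)\<bar> \<le> e"
      using abs_triangle_ineq[of "f \<eta> - f u" "g \<eta> - g u"] by (simp add: algebra_simps)
  qed (simp add: \<open>0 < d1\<close> \<open>0 < d2\<close>)
qed

lemma H_continuous_at_cmult:
  assumes "H_continuous_at M f u"
  shows "H_continuous_at M (\<lambda>\<eta>. c * f \<eta>) u"
proof (rule H_continuous_atI)
  fix e :: real
  assume "0 < e"
  then have "0 < e / (\<bar>c\<bar> + 1)"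
    by simp
  then obtain d where "0 < d" and d: "\<forall>\<eta>\<in>Hsp M. Hnorm M (\<lambda>x. \<eta> x - u x) < d \<longrightarrow> \<bar>f \<eta> - f u\<bar> < e / (\<bar>c\<bar> + 1)"
    using assms unfolding H_continuous_at_def by blast
  have "\<bar>c * f \<eta> - c * f u\<bar> \<le> e" if "\<bar>f \<eta> - f u\<bar> < e / (\<bar>c\<bar> + 1)" for \<eta>
  proof -
    have "\<bar>c * f \<eta> - c * f u\<bar> = \<bar>c\<bar> * \<bar>f \<eta> - f u\<bar>"
      by (simp add: abs_mult flip: right_diff_distrib)
    also have "\<dots> \<le> (\<bar>c\<bar> + 1) * (e / (\<bar>c\<bar> + 1))"
      using that by (intro mult_mono) auto
    finally show ?thesis
      by simp
  qed
  with \<open>0 < d\<close> d show "\<exists>d>0. \<forall>\<eta>\<in>Hsp M. Hnorm M (\<lambda>x. \<eta> x - u x) < d \<longrightarrow> \<bar>c * f \<eta> - c * f u\<bar> \<le> e"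
    by blast
qed

lemma H_frechet_gradient_continuous:
  assumes grad: "H_frechet_gradient M F G" and u: "u \<in> Hsp M"
  shows "H_continuous_at M F u"
proof (rule H_continuous_atI)
  fix e :: real
  assume "0 < e"
  obtain \<delta> where "0 < \<delta>" and \<delta>: "\<And>\<eta>. \<eta> \<in> Hsp M \<Longrightarrow> Hnorm M (\<lambda>x. \<eta> x - u x) < \<delta> \<Longrightarrow>
      \<bar>F \<eta> - F u - Hinner M (G u) (\<lambda>x. \<eta> x - u x)\<bar> \<le> 1 * Hnorm M (\<lambda>x. \<eta> x - u x)"
    using grad u unfolding H_frechet_gradient_def by (meson zero_less_one)
  define g where "g = Hnorm M (G u) + 1"
  have "0 < g"
    using Hnorm_nonneg[of M "G u"] by (simp add: g_def)
  have "\<bar>F \<eta> - F u\<bar> \<le> e" if \<eta>: "\<eta> \<in> Hsp M" and n: "Hnorm M (\<lambda>x. \<eta> x - u x) < min \<delta> (e / g)" for \<eta>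
  proof -
    have "\<bar>Hinner M (G u) (\<lambda>x. \<eta> x - u x)\<bar> \<le> Hnorm M (G u) * Hnorm M (\<lambda>x. \<eta> x - u x)"
      using H_frechet_gradient_in_Hsp[OF grad u] \<eta> u by (intro Hinner_Cauchy_Schwarz) simp_all
    then have "\<bar>F \<eta> - F u\<bar> \<le> g * Hnorm M (\<lambda>x. \<eta> x - u x)"
      using \<delta>[OF \<eta>] n by (simp add: g_def algebra_simps)
    also have "\<dots> \<le> g * (e / g)"
      using n \<open>0 < g\<close> by (intro mult_left_mono) auto
    finally show ?thesis
      using \<open>0 < g\<close> by simp
  qed
  with \<open>0 < \<delta>\<close> \<open>0 < e\<close> \<open>0 < g\<close>
  show "\<exists>d>0. \<forall>\<eta>\<in>Hsp M. Hnorm M (\<lambda>x. \<eta> x - u x) < d \<longrightarrow> \<bar>F \<eta> - F u\<bar> \<le> e"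
    by (intro exI[of _ "min \<delta> (e / g)"]) auto
qed

lemma H_continuous_at_Hnorm_diff_power2:
  assumes u: "u \<in> Hsp M" and \<xi>: "\<xi> \<in> Hsp M"
  shows "H_continuous_at M (\<lambda>\<eta>. (Hnorm M (\<lambda>x. \<eta> x - \<xi> x))\<^sup>2) u"
proof (rule H_continuous_atI)
  fix e :: real
  assume "0 < e"
  define b where "b = Hnorm M (\<lambda>x. u x - \<xi> x)"
  have "0 \<le> b"
    by (simp add: b_def Hnorm_nonneg)
  have "\<bar>(Hnorm M (\<lambda>x. \<eta> x - \<xi> x))\<^sup>2 - b\<^sup>2\<bar> \<le> e"
    if \<eta>: "\<eta> \<in> Hsp M" and n: "Hnorm M (\<lambda>x. \<eta> x - u x) < min 1 (e / (2 * b + 1))" for \<eta>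
  proof -
    define a where "a = Hnorm M (\<lambda>x. \<eta> x - \<xi> x)"
    define r where "r = Hnorm M (\<lambda>x. \<eta> x - u x)"
    have "a \<le> r + b" "b \<le> r + a"
      using Hnorm_triangle[OF \<eta> u \<xi>] Hnorm_triangle[OF u \<eta> \<xi>] Hnorm_minus_commute[of M u \<eta>]
      by (simp_all add: a_def b_def r_def)
    have "0 \<le> a"
      by (simp add: a_def Hnorm_nonneg)
    have "a\<^sup>2 - b\<^sup>2 = (a - b) * (a + b)"
      by (simp add: power2_eq_square algebra_simps)
    then have "\<bar>a\<^sup>2 - b\<^sup>2\<bar> = \<bar>a - b\<bar> * (a + b)"
      using \<open>0 \<le> a\<close> \<open>0 \<le> b\<close> by (simp add: abs_mult)
    also have "\<dots> \<le> r * (r + 2 * b)"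
      using \<open>a \<le> r + b\<close> \<open>b \<le> r + a\<close> \<open>0 \<le> a\<close> \<open>0 \<le> b\<close> by (intro mult_mono) auto
    also have "\<dots> \<le> (e / (2 * b + 1)) * (2 * b + 1)"
      using n \<open>0 \<le> b\<close> Hnorm_nonneg[of M "\<lambda>x. \<eta> x - u x"] unfolding r_def[symmetric]
      by (intro mult_mono) auto
    finally show ?thesis
      using \<open>0 \<le> b\<close> by (simp add: a_def)
  qed
  with \<open>0 < e\<close> \<open>0 \<le> b\<close>
  show "\<exists>d>0. \<forall>\<eta>\<in>Hsp M. Hnorm M (\<lambda>x. \<eta> x - u x) < d \<longrightarrow>
      \<bar>(Hnorm M (\<lambda>x. \<eta> x - \<xi> x))\<^sup>2 - (Hnorm M (\<lambda>x. u x - \<xi> x))\<^sup>2\<bar> \<le> e"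
    by (intro exI[of _ "min 1 (e / (2 * b + 1))"]) (auto simp: b_def)
qed

lemma le_abs_add_one_mult:
  fixes L :: real
  assumes "h \<le> L * \<bar>b - a\<bar>"
  shows "h \<le> (\<bar>L\<bar> + 1) * \<bar>b - a\<bar>"
proof -
  have "L * \<bar>b - a\<bar> \<le> (\<bar>L\<bar> + 1) * \<bar>b - a\<bar>"
    by (rule mult_right_mono) simp_all
  with assms show ?thesis
    by linarith
qed

lemma H_continuous_on_curve:
  fixes c :: "real \<Rightarrow> 'a::euclidean_space \<Rightarrow> 'a"
  assumes c: "\<And>a. a \<in> K \<Longrightarrow> c a \<in> Hsp M"
    and cont: "\<And>a. a \<in> K \<Longrightarrow> H_continuous_at M f (c a)"
    and lip: "\<And>a b. a \<in> K \<Longrightarrow> b \<in> K \<Longrightarrow> Hnorm M (\<lambda>x. c b x - c a x) \<le> L * \<bar>b - a\<bar>"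
  shows "continuous_on K (\<lambda>a. f (c a))"
  unfolding continuous_on_iff
proof (intro ballI allI impI)
  fix a e :: real
  assume "a \<in> K" "0 < e"
  then obtain d where "0 < d"
    and d: "\<And>\<eta>. \<eta> \<in> Hsp M \<Longrightarrow> Hnorm M (\<lambda>x. \<eta> x - c a x) < d \<Longrightarrow> \<bar>f \<eta> - f (c a)\<bar> < e"
    using cont unfolding H_continuous_at_def by blast
  have "dist (f (c b)) (f (c a)) < e" if "b \<in> K" "dist b a < d / (\<bar>L\<bar> + 1)" for b
  proof -
    have "Hnorm M (\<lambda>x. c b x - c a x) \<le> (\<bar>L\<bar> + 1) * \<bar>b - a\<bar>"
      using lip[OF \<open>a \<in> K\<close> \<open>b \<in> K\<close>] by (rule le_abs_add_one_mult)
    also have "\<dots> < d"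
      using that(2) by (simp add: dist_real_def field_simps)
    finally show ?thesis
      using d c[OF \<open>b \<in> K\<close>] by (simp add: dist_real_def)
  qed
  with \<open>0 < d\<close> show "\<exists>d>0. \<forall>b\<in>K. dist b a < d \<longrightarrow> dist (f (c b)) (f (c a)) < e"
    by (intro exI[of _ "d / (\<bar>L\<bar> + 1)"]) auto
qed

lemma compact_uniform_radius:
  fixes K :: "'a::metric_space set"
  assumes "compact K" and r: "\<And>a. a \<in> K \<Longrightarrow> 0 < r a"
  obtains d where "0 < d" "\<And>b. b \<in> K \<Longrightarrow> \<exists>a\<in>K. dist a b < r a \<and> d \<le> r a"
proof -
  have "K \<subseteq> (\<Union>a\<in>K. ball a (r a))"
    using r by (auto intro!: bexI)
  then obtain K' where "K' \<subseteq> K" "finite K'" and cover: "K \<subseteq> (\<Union>a\<in>K'. ball a (r a))"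
    by (rule compactE_image[OF \<open>compact K\<close> open_ball])
  define d where "d = Min (insert 1 (r ` K'))"
  have "0 < d"
    using \<open>finite K'\<close> \<open>K' \<subseteq> K\<close> r by (auto simp: d_def)
  moreover have "\<exists>a\<in>K. dist a b < r a \<and> d \<le> r a" if "b \<in> K" for b
  proof -
    obtain a where "a \<in> K'" "dist a b < r a"
      using cover \<open>b \<in> K\<close> by auto
    moreover have "d \<le> r a"
      unfolding d_def using \<open>finite K'\<close> \<open>a \<in> K'\<close> by (intro Min_le) auto
    ultimately show ?thesis
      using \<open>K' \<subseteq> K\<close> by blast
  qed
  ultimately show ?thesis
    using that by blast
qed

lemma H_continuous_uniformly_near_curve:
  fixes c :: "real \<Rightarrow> 'a::euclidean_space \<Rightarrow> 'a"
  assumes "compact K"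
    and c: "\<And>a. a \<in> K \<Longrightarrow> c a \<in> Hsp M"
    and cont: "\<And>a. a \<in> K \<Longrightarrow> H_continuous_at M f (c a)"
    and lip: "\<And>a b. a \<in> K \<Longrightarrow> b \<in> K \<Longrightarrow> Hnorm M (\<lambda>x. c b x - c a x) \<le> L * \<bar>b - a\<bar>"
    and "0 < e"
  obtains d where "0 < d"
    "\<And>b \<eta>. b \<in> K \<Longrightarrow> \<eta> \<in> Hsp M \<Longrightarrow> Hnorm M (\<lambda>x. \<eta> x - c b x) < d \<Longrightarrow> \<bar>f \<eta> - f (c b)\<bar> < e"
proof -
  define L' where "L' = \<bar>L\<bar> + 1"
  have "1 \<le> L'"
    by (simp add: L'_def)
  have "\<forall>a\<in>K. \<exists>r>0. \<forall>\<eta>\<in>Hsp M. Hnorm M (\<lambda>x. \<eta> x - c a x) < r \<longrightarrow> \<bar>f \<eta> - f (c a)\<bar> < e / 2"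
    using cont half_gt_zero[OF \<open>0 < e\<close>] unfolding H_continuous_at_def by blast
  then obtain r where r_pos: "\<And>a. a \<in> K \<Longrightarrow> 0 < r a"
    and r: "\<And>a \<eta>. a \<in> K \<Longrightarrow> \<eta> \<in> Hsp M \<Longrightarrow> Hnorm M (\<lambda>x. \<eta> x - c a x) < r a \<Longrightarrow> \<bar>f \<eta> - f (c a)\<bar> < e / 2"
    by (auto dest!: bchoice)
  obtain d where "0 < d"
    and d: "\<And>b. b \<in> K \<Longrightarrow> \<exists>a\<in>K. dist a b < r a / (2 * L') \<and> d \<le> r a / (2 * L')"
    using compact_uniform_radius[OF \<open>compact K\<close>, of "\<lambda>a. r a / (2 * L')"] r_pos \<open>1 \<le> L'\<close> by auto
  moreover have "\<bar>f \<eta> - f (c b)\<bar> < e"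
    if "b \<in> K" "\<eta> \<in> Hsp M" "Hnorm M (\<lambda>x. \<eta> x - c b x) < d" for b \<eta>
  proof -
    obtain a where "a \<in> K" and ab: "dist a b < r a / (2 * L')" and "d \<le> r a / (2 * L')"
      using d \<open>b \<in> K\<close> by blast
    have "Hnorm M (\<lambda>x. c b x - c a x) \<le> L' * \<bar>b - a\<bar>"
      unfolding L'_def using lip[OF \<open>a \<in> K\<close> \<open>b \<in> K\<close>] by (rule le_abs_add_one_mult)
    also have "\<dots> < r a / 2"
      using ab \<open>1 \<le> L'\<close> by (simp add: dist_real_def abs_minus_commute field_simps)
    finally have cb: "Hnorm M (\<lambda>x. c b x - c a x) < r a / 2" .
    have "d \<le> r a / 2"
      using \<open>d \<le> r a / (2 * L')\<close> \<open>1 \<le> L'\<close> r_pos[OF \<open>a \<in> K\<close>]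
      by (smt (verit) divide_left_mono mult_le_cancel_left1 mult_pos_pos)
    have "Hnorm M (\<lambda>x. \<eta> x - c a x) \<le> Hnorm M (\<lambda>x. \<eta> x - c b x) + Hnorm M (\<lambda>x. c b x - c a x)"
      using that(2) c \<open>a \<in> K\<close> \<open>b \<in> K\<close> by (intro Hnorm_triangle) auto
    also have "\<dots> < r a"
      using that(3) cb \<open>d \<le> r a / 2\<close> by linarith
    finally have "\<bar>f \<eta> - f (c a)\<bar> < e / 2"
      using r \<open>a \<in> K\<close> that(2) by blast
    moreover have "\<bar>f (c b) - f (c a)\<bar> < e / 2"
      using r[OF \<open>a \<in> K\<close> c[OF \<open>b \<in> K\<close>]] cb r_pos[OF \<open>a \<in> K\<close>] by simp
    ultimately show ?thesis
      by linarith
  qed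
  ultimately show ?thesis
    using that by blast
qed

section \<open>Passage to the limit\<close>

(* X tau n is the n-th step of the scheme with step size tau, so X tau (nat (floor (t / tau))) is
   its piecewise constant interpolant at time t; limits as tau tends to 0 are taken along T. *)
locale minimizing_movement_limit =
  fixes M :: "'a::euclidean_space measure"
    and F :: "('a \<Rightarrow> 'a) \<Rightarrow> real"
    and G :: "('a \<Rightarrow> 'a) \<Rightarrow> ('a \<Rightarrow> 'a)"
    and lam :: real
    and T :: "real set"
    and X :: "real \<Rightarrow> nat \<Rightarrow> ('a \<Rightarrow> 'a)"
    and Xlim :: "real \<Rightarrow> ('a \<Rightarrow> 'a)"
  assumes gradient: "H_frechet_gradient M F G"
    and convex: "H_lambda_convex M lam F"
    and T_pos: "T \<subseteq> {0<..}"
    and T_limpt: "0 islimpt T"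
    and X_0: "\<And>\<tau>. \<tau> \<in> T \<Longrightarrow> X \<tau> 0 \<in> Hsp M"
    and X_Suc: "\<And>\<tau> n. \<tau> \<in> T \<Longrightarrow> X \<tau> (Suc n) \<in> Hsp M"
    and X_minimizer: "\<And>\<tau> n. \<tau> \<in> T \<Longrightarrow>
      \<forall>\<xi>\<in>Hsp M. scheme_obj M F G \<tau> (X \<tau> n) (X \<tau> (Suc n)) \<le> scheme_obj M F G \<tau> (X \<tau> n) \<xi>"
    and X_0_gradient_bdd: "bdd_above ((\<lambda>\<tau>. Hnorm M (G (X \<tau> 0))) ` T)"
    and Xlim_Hsp: "\<And>t. 0 \<le> t \<Longrightarrow> Xlim t \<in> Hsp M"
    and Xlim_Lipschitz: "\<And>S. \<exists>L. \<forall>s\<in>{0..S}. \<forall>t\<in>{0..S}. Hnorm M (\<lambda>x. Xlim t x - Xlim s x) \<le> L * \<bar>t - s\<bar>"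
    and X_converges: "\<And>S \<epsilon>. 0 < \<epsilon> \<Longrightarrow> \<forall>\<^sub>F \<tau> in at 0 within T. \<forall>t\<in>{0..S}.
      Hnorm M (\<lambda>x. X \<tau> (nat \<lfloor>t / \<tau>\<rfloor>) x - Xlim t x) \<le> \<epsilon>"
begin

definition evi_integrand :: "('a \<Rightarrow> 'a) \<Rightarrow> ('a \<Rightarrow> 'a) \<Rightarrow> real" where
  "evi_integrand \<xi> \<eta> = F \<eta> + lam / 2 * (Hnorm M (\<lambda>x. \<eta> x - \<xi> x))\<^sup>2"

lemma X_Hsp: "\<tau> \<in> T \<Longrightarrow> X \<tau> n \<in> Hsp M"
  by (cases n) (simp_all add: X_0 X_Suc)

lemma at_within_T_nontrivial: "at 0 within T \<noteq> bot"
  using T_limpt by (simp add: trivial_limit_within)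

lemma eventually_in_T: "\<forall>\<^sub>F \<tau> in at 0 within T. \<tau> \<in> T \<and> 0 < \<tau>"
  unfolding eventually_at_filter using T_pos by (auto intro!: always_eventually)

lemma at_within_T_le_at_right: "at 0 within T \<le> at_right 0"
  using T_pos by (rule at_le)

lemma eventually_step_small: "0 < c \<Longrightarrow> \<forall>\<^sub>F \<tau> in at 0 within T. \<tau> < c"
  using order_tendstoD(2)[OF tendsto_ident_at] by blast

lemma discrete_evi_sum:
  assumes "\<tau> \<in> T" "m \<le> k" "\<xi> \<in> Hsp M"
  shows "((Hnorm M (\<lambda>x. X \<tau> k x - \<xi> x))\<^sup>2 - (Hnorm M (\<lambda>x. X \<tau> m x - \<xi> x))\<^sup>2) / 2
      + \<tau> * (\<Sum>n = m..<k. (evi_integrand \<xi> (X \<tau> n) + evi_integrand \<xi> (X \<tau> (Suc n))) / 2)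
      + \<tau>\<^sup>2 / 8 * ((Hnorm M (G (X \<tau> k)))\<^sup>2 - (Hnorm M (G (X \<tau> m)))\<^sup>2)
    \<le> (real k - real m) * \<tau> * F \<xi>"
proof -
  define P where "P n = (Hnorm M (\<lambda>x. X \<tau> n x - \<xi> x))\<^sup>2 / 2 + \<tau>\<^sup>2 / 8 * (Hnorm M (G (X \<tau> n)))\<^sup>2" for n
  define h where "h n = (evi_integrand \<xi> (X \<tau> n) + evi_integrand \<xi> (X \<tau> (Suc n))) / 2" for n
  have "0 < \<tau>"
    using assms(1) T_pos by auto
  have "P (Suc n) - P n + \<tau> * h n \<le> \<tau> * F \<xi>" for n
  proof -
    define A where "A = (Hnorm M (\<lambda>x. X \<tau> (Suc n) x - \<xi> x))\<^sup>2 - (Hnorm M (\<lambda>x. X \<tau> n x - \<xi> x))\<^sup>2"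
    define C where "C = (Hnorm M (G (X \<tau> (Suc n))))\<^sup>2 - (Hnorm M (G (X \<tau> n)))\<^sup>2"
    have "A / (2 * \<tau>) + h n + \<tau> / 8 * C \<le> F \<xi>"
      using scheme_step_evi[OF gradient convex \<open>0 < \<tau>\<close> X_Hsp X_Hsp \<open>\<xi> \<in> Hsp M\<close> X_minimizer] assms(1)
      by (simp add: A_def C_def h_def evi_integrand_def algebra_simps add_divide_distrib)
    then have "\<tau> * (A / (2 * \<tau>) + h n + \<tau> / 8 * C) \<le> \<tau> * F \<xi>"
      using \<open>0 < \<tau>\<close> by (intro mult_left_mono) auto
    moreover have "\<tau> * (A / (2 * \<tau>) + h n + \<tau> / 8 * C) = P (Suc n) - P n + \<tau> * h n"
      using \<open>0 < \<tau>\<close> by (simp add: P_def A_def C_def power2_eq_square[of \<tau>] field_simps)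
    ultimately show ?thesis
      by simp
  qed
  then have "(\<Sum>n = m..<k. P (Suc n) - P n + \<tau> * h n) \<le> (\<Sum>n = m..<k. \<tau> * F \<xi>)"
    by (intro sum_mono)
  then have "P k - P m + \<tau> * (\<Sum>n = m..<k. h n) \<le> (real k - real m) * \<tau> * F \<xi>"
    using \<open>m \<le> k\<close> by (simp add: sum.distrib sum_Suc_diff' sum_distrib_left of_nat_diff)
  then show ?thesis
    by (simp add: P_def h_def algebra_simps diff_divide_distrib)
qed

lemma gradient_norm_power2_le_exp:
  assumes "\<tau> \<in> T" "\<bar>lam\<bar> * \<tau> \<le> 1 / 2"
  shows "(Hnorm M (G (X \<tau> n)))\<^sup>2 \<le> exp (4 * \<bar>lam\<bar> * (real n * \<tau>)) * (SUP \<sigma>\<in>T. Hnorm M (G (X \<sigma> 0)))\<^sup>2"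
proof -
  have "0 < \<tau>"
    using assms(1) T_pos by auto
  have "(Hnorm M (G (X \<tau> n)))\<^sup>2 \<le> exp (4 * (\<bar>lam\<bar> * \<tau>) * real n) * (Hnorm M (G (X \<tau> 0)))\<^sup>2"
    using scheme_step_gradient_growth[OF gradient convex \<open>0 < \<tau>\<close> X_Hsp X_Hsp X_minimizer] assms \<open>0 < \<tau>\<close>
    by (intro exp_bound_of_growth) auto
  also have "\<dots> \<le> exp (4 * \<bar>lam\<bar> * (real n * \<tau>)) * (SUP \<sigma>\<in>T. Hnorm M (G (X \<sigma> 0)))\<^sup>2"
    using cSUP_upper[OF assms(1) X_0_gradient_bdd] Hnorm_nonneg
    by (auto simp: algebra_simps intro!: mult_left_mono power_mono)
  finally show ?thesis .
qed

end

context minimizing_movement_limit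
begin

lemma eventually_X_near_Xlim:
  assumes "0 < \<delta>"
  shows "\<forall>\<^sub>F \<tau> in at 0 within T. \<forall>n a. a \<in> {0..S} \<longrightarrow> real n * \<tau> \<le> S \<longrightarrow> \<bar>a - real n * \<tau>\<bar> \<le> \<tau> \<longrightarrow>
    Hnorm M (\<lambda>x. X \<tau> n x - Xlim a x) < \<delta>"
proof -
  obtain L where L: "\<And>a b. a \<in> {0..S} \<Longrightarrow> b \<in> {0..S} \<Longrightarrow> Hnorm M (\<lambda>x. Xlim b x - Xlim a x) \<le> L * \<bar>b - a\<bar>"
    using Xlim_Lipschitz[of S] by blast
  define L' where "L' = \<bar>L\<bar> + 1"
  have "0 < L'"
    by (simp add: L'_def)
  have "0 < \<delta> / (2 * L')" "0 < \<delta> / 2"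
    using \<open>0 < \<delta>\<close> \<open>0 < L'\<close> by simp_all
  note eventually_in_T eventually_step_small[OF \<open>0 < \<delta> / (2 * L')\<close>] X_converges[OF \<open>0 < \<delta> / 2\<close>, of S]
  then show ?thesis
  proof eventually_elim
    case (elim \<tau>)
    show ?case
    proof (intro allI impI)
      fix n a
      assume a: "a \<in> {0..S}" and n: "real n * \<tau> \<le> S" and close: "\<bar>a - real n * \<tau>\<bar> \<le> \<tau>"
      have grid: "real n * \<tau> \<in> {0..S}"
        using elim n by simp
      have "Hnorm M (\<lambda>x. X \<tau> n x - Xlim a x)
          \<le> Hnorm M (\<lambda>x. X \<tau> n x - Xlim (real n * \<tau>) x) + Hnorm M (\<lambda>x. Xlim (real n * \<tau>) x - Xlim a x)"
        using elim a grid by (intro Hnorm_triangle X_Hsp Xlim_Hsp) auto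
      also have "\<dots> \<le> \<delta> / 2 + L' * \<tau>"
      proof (rule add_mono)
        have "Hnorm M (\<lambda>x. X \<tau> (nat \<lfloor>real n * \<tau> / \<tau>\<rfloor>) x - Xlim (real n * \<tau>) x) \<le> \<delta> / 2"
          using elim grid by blast
        then show "Hnorm M (\<lambda>x. X \<tau> n x - Xlim (real n * \<tau>) x) \<le> \<delta> / 2"
          using elim by simp
        have "Hnorm M (\<lambda>x. Xlim (real n * \<tau>) x - Xlim a x) \<le> L' * \<bar>real n * \<tau> - a\<bar>"
          unfolding L'_def using L[OF a grid] by (rule le_abs_add_one_mult)
        also have "\<dots> \<le> L' * \<tau>"
          using close \<open>0 < L'\<close> by (simp add: abs_minus_commute)
        finally show "Hnorm M (\<lambda>x. Xlim (real n * \<tau>) x - Xlim a x) \<le> L' * \<tau>" .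
      qed
      also have "\<dots> < \<delta>"
        using elim \<open>0 < L'\<close> by (simp add: field_simps)
      finally show "Hnorm M (\<lambda>x. X \<tau> n x - Xlim a x) < \<delta>" .
    qed
  qed
qed

lemma eventually_X_values_near_Xlim:
  assumes cont: "\<And>a. a \<in> {0..S} \<Longrightarrow> H_continuous_at M f (Xlim a)" and "0 < e"
  shows "\<forall>\<^sub>F \<tau> in at 0 within T. \<forall>n a. a \<in> {0..S} \<longrightarrow> real n * \<tau> \<le> S \<longrightarrow> \<bar>a - real n * \<tau>\<bar> \<le> \<tau> \<longrightarrow>
    \<bar>f (X \<tau> n) - f (Xlim a)\<bar> < e"
proof -
  obtain L where L: "\<And>a b. a \<in> {0..S} \<Longrightarrow> b \<in> {0..S} \<Longrightarrow> Hnorm M (\<lambda>x. Xlim b x - Xlim a x) \<le> L * \<bar>b - a\<bar>"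
    using Xlim_Lipschitz[of S] by blast
  obtain d where "0 < d"
    and d: "\<And>b \<eta>. b \<in> {0..S} \<Longrightarrow> \<eta> \<in> Hsp M \<Longrightarrow> Hnorm M (\<lambda>x. \<eta> x - Xlim b x) < d \<Longrightarrow> \<bar>f \<eta> - f (Xlim b)\<bar> < e"
    by (rule H_continuous_uniformly_near_curve[OF compact_Icc _ cont L \<open>0 < e\<close>]) (auto simp: Xlim_Hsp)
  show ?thesis
    using eventually_conj[OF eventually_in_T eventually_X_near_Xlim[OF \<open>0 < d\<close>, of S]]
    by eventually_elim (use d X_Hsp in blast)
qed

lemma tendsto_at_grid_point:
  assumes "0 \<le> t" and cont: "H_continuous_at M f (Xlim t)"
  shows "((\<lambda>\<tau>. f (X \<tau> (nat \<lfloor>t / \<tau>\<rfloor>))) \<longlongrightarrow> f (Xlim t)) (at 0 within T)"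
proof (rule tendstoI)
  fix e :: real
  assume "0 < e"
  then obtain d where "0 < d"
    and d: "\<And>\<eta>. \<eta> \<in> Hsp M \<Longrightarrow> Hnorm M (\<lambda>x. \<eta> x - Xlim t x) < d \<Longrightarrow> \<bar>f \<eta> - f (Xlim t)\<bar> < e"
    using cont unfolding H_continuous_at_def by blast
  show "\<forall>\<^sub>F \<tau> in at 0 within T. dist (f (X \<tau> (nat \<lfloor>t / \<tau>\<rfloor>))) (f (Xlim t)) < e"
    using eventually_in_T X_converges[OF half_gt_zero[OF \<open>0 < d\<close>], of t]
  proof eventually_elim
    case (elim \<tau>)
    have "t \<in> {0..t}"
      using \<open>0 \<le> t\<close> by simp
    with elim \<open>0 < d\<close> have "Hnorm M (\<lambda>x. X \<tau> (nat \<lfloor>t / \<tau>\<rfloor>) x - Xlim t x) < d"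
      by fastforce
    then show ?case
      using d[OF X_Hsp] elim by (simp add: dist_real_def)
  qed
qed

lemma tendsto_grid: "0 \<le> c \<Longrightarrow> ((\<lambda>\<tau>. real (nat \<lfloor>c / \<tau>\<rfloor>) * \<tau>) \<longlongrightarrow> c) (at 0 within T)"
  by (rule tendsto_mono[OF at_within_T_le_at_right tendsto_floor_grid])

lemma continuous_on_Xlim:
  assumes "\<And>a. a \<in> {0..t} \<Longrightarrow> H_continuous_at M f (Xlim a)"
  shows "continuous_on {0..t} (\<lambda>a. f (Xlim a))"
proof -
  obtain L where "\<And>a b. a \<in> {0..t} \<Longrightarrow> b \<in> {0..t} \<Longrightarrow> Hnorm M (\<lambda>x. Xlim b x - Xlim a x) \<le> L * \<bar>b - a\<bar>"
    using Xlim_Lipschitz[of t] by blast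
  with assms show ?thesis
    by (intro H_continuous_on_curve[where c = Xlim]) (auto intro: Xlim_Hsp)
qed

lemma eventually_grid_bounds:
  assumes "0 \<le> s" "s \<le> t"
  shows "\<forall>\<^sub>F \<tau> in at 0 within T. 0 \<le> real (nat \<lfloor>s / \<tau>\<rfloor>) * \<tau>
    \<and> real (nat \<lfloor>s / \<tau>\<rfloor>) * \<tau> \<le> real (nat \<lfloor>t / \<tau>\<rfloor>) * \<tau> \<and> real (nat \<lfloor>t / \<tau>\<rfloor>) * \<tau> \<le> t"
  using eventually_in_T
proof eventually_elim
  case (elim \<tau>)
  then show ?case
    using floor_grid_bounds(1)[of t \<tau>] assms
    by (auto intro!: mult_right_mono simp: divide_right_mono floor_mono nat_mono)
qed

lemma grid_average_near_Xlim:
  fixes f :: "('a \<Rightarrow> 'a) \<Rightarrow> real"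
  assumes near: "\<forall>n a. a \<in> {0..t} \<longrightarrow> real n * \<tau> \<le> t \<longrightarrow> \<bar>a - real n * \<tau>\<bar> \<le> \<tau> \<longrightarrow>
      \<bar>f (X \<tau> n) - f (Xlim a)\<bar> < e"
    and "0 < \<tau>" "real (Suc n) * \<tau> \<le> t" "a \<in> {real n * \<tau>..real (Suc n) * \<tau>}"
  shows "\<bar>f (Xlim a) - (f (X \<tau> n) + f (X \<tau> (Suc n))) / 2\<bar> \<le> e"
proof -
  have "0 \<le> real n * \<tau>"
    using \<open>0 < \<tau>\<close> by simp
  then have "0 \<le> a"
    using assms(4) by (meson atLeastAtMost_iff order_trans)
  with assms(3,4) have "a \<in> {0..t}" "real n * \<tau> \<le> t"
    "\<bar>a - real n * \<tau>\<bar> \<le> \<tau>" "\<bar>a - real (Suc n) * \<tau>\<bar> \<le> \<tau>"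
    by (auto simp: algebra_simps)
  with assms(3) have "\<bar>f (X \<tau> n) - f (Xlim a)\<bar> < e" "\<bar>f (X \<tau> (Suc n)) - f (Xlim a)\<bar> < e"
    using near by blast+
  then show ?thesis
    by (simp add: abs_less_iff abs_le_iff field_simps)
qed

lemma eventually_riemann_sum_close:
  assumes "0 \<le> s" "s \<le> t" and cont: "\<And>a. a \<in> {0..t} \<Longrightarrow> H_continuous_at M f (Xlim a)" and "0 < e"
  shows "\<forall>\<^sub>F \<tau> in at 0 within T.
    \<bar>integral {real (nat \<lfloor>s / \<tau>\<rfloor>) * \<tau>..real (nat \<lfloor>t / \<tau>\<rfloor>) * \<tau>} (\<lambda>a. f (Xlim a))
      - \<tau> * (\<Sum>n = nat \<lfloor>s / \<tau>\<rfloor>..<nat \<lfloor>t / \<tau>\<rfloor>. (f (X \<tau> n) + f (X \<tau> (Suc n))) / 2)\<bar> \<le> t * e"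
proof -
  have int: "(\<lambda>a. f (Xlim a)) integrable_on {0..t}"
    using continuous_on_Xlim[OF cont] by (rule integrable_continuous_interval)
  have "\<forall>\<^sub>F \<tau> in at 0 within T. \<forall>n a. a \<in> {0..t} \<longrightarrow> real n * \<tau> \<le> t \<longrightarrow> \<bar>a - real n * \<tau>\<bar> \<le> \<tau> \<longrightarrow>
      \<bar>f (X \<tau> n) - f (Xlim a)\<bar> < e"
    using cont \<open>0 < e\<close> by (rule eventually_X_values_near_Xlim)
  with eventually_in_T eventually_grid_bounds[OF assms(1,2)]
  show ?thesis
  proof eventually_elim
    case (elim \<tau>)
    define m where "m = nat \<lfloor>s / \<tau>\<rfloor>"
    define k where "k = nat \<lfloor>t / \<tau>\<rfloor>"
    have mk: "0 \<le> real m * \<tau>" "real m * \<tau> \<le> real k * \<tau>" "real k * \<tau> \<le> t" "m \<le> k"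
      using elim by (auto simp: m_def k_def)
    have "\<bar>integral {real m * \<tau>..real k * \<tau>} (\<lambda>a. f (Xlim a))
        - \<tau> * (\<Sum>n = m..<k. (f (X \<tau> n) + f (X \<tau> (Suc n))) / 2)\<bar> \<le> (real k - real m) * \<tau> * e"
    proof (rule integral_grid_riemann_sum)
      show "(\<lambda>a. f (Xlim a)) integrable_on {real m * \<tau>..real k * \<tau>}"
        using mk by (intro integrable_subinterval_real[OF int]) auto
      fix n a
      assume "m \<le> n" "n < k" "a \<in> {real n * \<tau>..real (Suc n) * \<tau>}"
      moreover from \<open>n < k\<close> have "real (Suc n) * \<tau> \<le> t"
        using elim mk(3) by (smt (verit) Suc_leI mult_right_mono of_nat_le_iff)
      ultimately show "\<bar>f (Xlim a) - (f (X \<tau> n) + f (X \<tau> (Suc n))) / 2\<bar> \<le> e"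
        using elim by (intro grid_average_near_Xlim) auto
    qed (use elim mk in auto)
    also have "(real k - real m) * \<tau> * e \<le> t * e"
      using mk \<open>0 < e\<close> by (intro mult_right_mono) (auto simp: algebra_simps)
    finally show ?case
      by (simp add: m_def k_def)
  qed
qed

lemma tendsto_riemann_sum:
  assumes "0 \<le> s" "s \<le> t" and cont: "\<And>a. a \<in> {0..t} \<Longrightarrow> H_continuous_at M f (Xlim a)"
  shows "((\<lambda>\<tau>. \<tau> * (\<Sum>n = nat \<lfloor>s / \<tau>\<rfloor>..<nat \<lfloor>t / \<tau>\<rfloor>. (f (X \<tau> n) + f (X \<tau> (Suc n))) / 2))
    \<longlongrightarrow> integral {s..t} (\<lambda>a. f (Xlim a))) (at 0 within T)"
proof -
  define I where "I x = integral {0..x} (\<lambda>a. f (Xlim a))" for x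
  define grid where "grid c \<tau> = real (nat \<lfloor>c / \<tau>\<rfloor>) * \<tau>" for c \<tau> :: real
  define R where "R \<tau> = \<tau> * (\<Sum>n = nat \<lfloor>s / \<tau>\<rfloor>..<nat \<lfloor>t / \<tau>\<rfloor>. (f (X \<tau> n) + f (X \<tau> (Suc n))) / 2)" for \<tau>
  have int: "(\<lambda>a. f (Xlim a)) integrable_on {0..t}"
    using continuous_on_Xlim[OF cont] by (rule integrable_continuous_interval)
  have bounds: "\<forall>\<^sub>F \<tau> in at 0 within T. 0 \<le> grid s \<tau> \<and> grid s \<tau> \<le> grid t \<tau> \<and> grid t \<tau> \<le> t"
    unfolding grid_def using assms(1,2) by (rule eventually_grid_bounds)
  have "\<forall>\<^sub>F \<tau> in at 0 within T. grid t \<tau> \<in> {0..t}" "\<forall>\<^sub>F \<tau> in at 0 within T. grid s \<tau> \<in> {0..t}"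
    using bounds by (auto elim!: eventually_mono)
  then have "((\<lambda>\<tau>. I (grid t \<tau>) - I (grid s \<tau>)) \<longlongrightarrow> I t - I s) (at 0 within T)"
    using indefinite_integral_continuous_1[OF int] assms(1,2)
    by (intro tendsto_diff continuous_on_tendsto_compose[of "{0..t}" I]
        tendsto_grid[unfolded grid_def[symmetric]])
      (auto simp: I_def)
  moreover have "I t - I s = integral {s..t} (\<lambda>a. f (Xlim a))"
    using Henstock_Kurzweil_Integration.integral_combine[OF \<open>0 \<le> s\<close> \<open>s \<le> t\<close> int] by (simp add: I_def)
  moreover have "((\<lambda>\<tau>. R \<tau> - (I (grid t \<tau>) - I (grid s \<tau>))) \<longlongrightarrow> 0) (at 0 within T)"
  proof (rule tendstoI)
    fix \<epsilon> :: real
    assume "0 < \<epsilon>"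
    then have "0 < \<epsilon> / (t + 1)" and small: "t * (\<epsilon> / (t + 1)) < \<epsilon>"
      using assms by (simp_all add: field_simps)
    have "\<forall>\<^sub>F \<tau> in at 0 within T.
        \<bar>integral {grid s \<tau>..grid t \<tau>} (\<lambda>a. f (Xlim a)) - R \<tau>\<bar> \<le> t * (\<epsilon> / (t + 1))"
      unfolding R_def grid_def using assms \<open>0 < \<epsilon> / (t + 1)\<close> by (rule eventually_riemann_sum_close)
    with bounds show "\<forall>\<^sub>F \<tau> in at 0 within T. dist (R \<tau> - (I (grid t \<tau>) - I (grid s \<tau>))) 0 < \<epsilon>"
    proof eventually_elim
      case (elim \<tau>)
      then have "(\<lambda>a. f (Xlim a)) integrable_on {0..grid t \<tau>}"
        by (intro integrable_subinterval_real[OF int]) auto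
      then have "I (grid t \<tau>) - I (grid s \<tau>) = integral {grid s \<tau>..grid t \<tau>} (\<lambda>a. f (Xlim a))"
        using Henstock_Kurzweil_Integration.integral_combine[of 0 "grid s \<tau>" "grid t \<tau>" "\<lambda>a. f (Xlim a)"]
          elim
        by (simp add: I_def)
      with elim small show ?case
        by (simp add: dist_real_def abs_minus_commute)
    qed
  qed
  ultimately have "((\<lambda>\<tau>. (R \<tau> - (I (grid t \<tau>) - I (grid s \<tau>))) + (I (grid t \<tau>) - I (grid s \<tau>)))
      \<longlongrightarrow> 0 + integral {s..t} (\<lambda>a. f (Xlim a))) (at 0 within T)"
    by (intro tendsto_add) simp_all
  then show ?thesis
    by (simp add: R_def)
qed

lemma H_continuous_at_evi_integrand:
  assumes "\<xi> \<in> Hsp M" "u \<in> Hsp M"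
  shows "H_continuous_at M (evi_integrand \<xi>) u"
proof -
  have eq: "evi_integrand \<xi> = (\<lambda>\<eta>. F \<eta> + lam / 2 * (Hnorm M (\<lambda>x. \<eta> x - \<xi> x))\<^sup>2)"
    by (simp add: fun_eq_iff evi_integrand_def)
  show ?thesis
    unfolding eq
    by (intro H_continuous_at_add H_continuous_at_cmult H_frechet_gradient_continuous[OF gradient]
        H_continuous_at_Hnorm_diff_power2 assms)
qed

lemma integral_evi_integrand:
  assumes "0 \<le> s" "s \<le> t" "\<xi> \<in> Hsp M"
  shows "integral {s..t} (\<lambda>a. evi_integrand \<xi> (Xlim a))
    = integral {s..t} (\<lambda>a. F (Xlim a)) + lam / 2 * integral {s..t} (\<lambda>a. (Hnorm M (\<lambda>x. Xlim a x - \<xi> x))\<^sup>2)"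
proof -
  have "(\<lambda>a. F (Xlim a)) integrable_on {0..t}" "(\<lambda>a. (Hnorm M (\<lambda>x. Xlim a x - \<xi> x))\<^sup>2) integrable_on {0..t}"
    using assms by (auto intro!: integrable_continuous_interval continuous_on_Xlim Xlim_Hsp
        H_frechet_gradient_continuous[OF gradient] H_continuous_at_Hnorm_diff_power2)
  then have "(\<lambda>a. F (Xlim a)) integrable_on {s..t}"
    "(\<lambda>a. (Hnorm M (\<lambda>x. Xlim a x - \<xi> x))\<^sup>2) integrable_on {s..t}"
    using assms by (auto intro: integrable_subinterval_real)
  then show ?thesis
    unfolding evi_integrand_def
    by (subst Henstock_Kurzweil_Integration.integral_add) (auto intro: integrable_on_mult_right)
qed

lemma eventually_discrete_evi:
  assumes "0 \<le> s" "s \<le> t" "\<xi> \<in> Hsp M"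
  obtains C where "\<forall>\<^sub>F \<tau> in at 0 within T.
    ((Hnorm M (\<lambda>x. X \<tau> (nat \<lfloor>t / \<tau>\<rfloor>) x - \<xi> x))\<^sup>2 - (Hnorm M (\<lambda>x. X \<tau> (nat \<lfloor>s / \<tau>\<rfloor>) x - \<xi> x))\<^sup>2) / 2
      + \<tau> * (\<Sum>n = nat \<lfloor>s / \<tau>\<rfloor>..<nat \<lfloor>t / \<tau>\<rfloor>. (evi_integrand \<xi> (X \<tau> n) + evi_integrand \<xi> (X \<tau> (Suc n))) / 2)
    \<le> (real (nat \<lfloor>t / \<tau>\<rfloor>) * \<tau> - real (nat \<lfloor>s / \<tau>\<rfloor>) * \<tau>) * F \<xi> + \<tau>\<^sup>2 * C"
proof -
  have "\<forall>\<^sub>F \<tau> in at 0 within T. \<tau> < 1 / (2 * \<bar>lam\<bar> + 1)"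
    by (rule eventually_step_small) (simp add: add_nonneg_pos)
  with eventually_in_T have "\<forall>\<^sub>F \<tau> in at 0 within T.
    ((Hnorm M (\<lambda>x. X \<tau> (nat \<lfloor>t / \<tau>\<rfloor>) x - \<xi> x))\<^sup>2 - (Hnorm M (\<lambda>x. X \<tau> (nat \<lfloor>s / \<tau>\<rfloor>) x - \<xi> x))\<^sup>2) / 2
      + \<tau> * (\<Sum>n = nat \<lfloor>s / \<tau>\<rfloor>..<nat \<lfloor>t / \<tau>\<rfloor>. (evi_integrand \<xi> (X \<tau> n) + evi_integrand \<xi> (X \<tau> (Suc n))) / 2)
    \<le> (real (nat \<lfloor>t / \<tau>\<rfloor>) * \<tau> - real (nat \<lfloor>s / \<tau>\<rfloor>) * \<tau>) * F \<xi>
      + \<tau>\<^sup>2 * (exp (4 * \<bar>lam\<bar> * s) * (SUP \<sigma>\<in>T. Hnorm M (G (X \<sigma> 0)))\<^sup>2 / 8)"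
  proof eventually_elim
    case (elim \<tau>)
    then have "\<tau> \<in> T"
      by simp
    define m where "m = nat \<lfloor>s / \<tau>\<rfloor>"
    define k where "k = nat \<lfloor>t / \<tau>\<rfloor>"
    have "m \<le> k"
      using elim assms by (simp add: m_def k_def divide_right_mono floor_mono nat_mono)
    have "(Hnorm M (G (X \<tau> m)))\<^sup>2 \<le> exp (4 * \<bar>lam\<bar> * (real m * \<tau>)) * (SUP \<sigma>\<in>T. Hnorm M (G (X \<sigma> 0)))\<^sup>2"
      using elim by (intro gradient_norm_power2_le_exp) (auto simp: field_simps)
    also have "\<dots> \<le> exp (4 * \<bar>lam\<bar> * s) * (SUP \<sigma>\<in>T. Hnorm M (G (X \<sigma> 0)))\<^sup>2"
      using floor_grid_bounds(1)[OF \<open>0 \<le> s\<close>] elim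
      by (auto simp: m_def intro!: mult_right_mono mult_left_mono)
    finally have "\<tau>\<^sup>2 / 8 * (Hnorm M (G (X \<tau> m)))\<^sup>2
        \<le> \<tau>\<^sup>2 * (exp (4 * \<bar>lam\<bar> * s) * (SUP \<sigma>\<in>T. Hnorm M (G (X \<sigma> 0)))\<^sup>2 / 8)"
      by (simp add: mult_left_mono)
    moreover have "0 \<le> \<tau>\<^sup>2 / 8 * (Hnorm M (G (X \<tau> k)))\<^sup>2"
      by simp
    ultimately show ?case
      using discrete_evi_sum[OF \<open>\<tau> \<in> T\<close> \<open>m \<le> k\<close> assms(3)] unfolding m_def k_def by argo
  qed
  then show ?thesis
    by (rule that)
qed

lemma integrated_evi:
  assumes "0 \<le> s" "s \<le> t" "\<xi> \<in> Hsp M"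
  shows "((Hnorm M (\<lambda>x. Xlim t x - \<xi> x))\<^sup>2 - (Hnorm M (\<lambda>x. Xlim s x - \<xi> x))\<^sup>2) / 2
      + lam / 2 * integral {s..t} (\<lambda>a. (Hnorm M (\<lambda>x. Xlim a x - \<xi> x))\<^sup>2)
      + integral {s..t} (\<lambda>a. F (Xlim a))
    \<le> (t - s) * F \<xi>"
proof -
  define Q where "Q = (\<lambda>\<eta>. (Hnorm M (\<lambda>x. \<eta> x - \<xi> x))\<^sup>2)"
  have cont: "H_continuous_at M Q (Xlim a)" "H_continuous_at M (evi_integrand \<xi>) (Xlim a)"
    if "a \<in> {0..t}" for a
    using that assms(3) Xlim_Hsp[of a]
    by (simp_all add: Q_def H_continuous_at_Hnorm_diff_power2 H_continuous_at_evi_integrand)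
  obtain C where discrete: "\<forall>\<^sub>F \<tau> in at 0 within T.
    (Q (X \<tau> (nat \<lfloor>t / \<tau>\<rfloor>)) - Q (X \<tau> (nat \<lfloor>s / \<tau>\<rfloor>))) / 2
      + \<tau> * (\<Sum>n = nat \<lfloor>s / \<tau>\<rfloor>..<nat \<lfloor>t / \<tau>\<rfloor>. (evi_integrand \<xi> (X \<tau> n) + evi_integrand \<xi> (X \<tau> (Suc n))) / 2)
    \<le> (real (nat \<lfloor>t / \<tau>\<rfloor>) * \<tau> - real (nat \<lfloor>s / \<tau>\<rfloor>) * \<tau>) * F \<xi> + \<tau>\<^sup>2 * C"
    unfolding Q_def by (rule eventually_discrete_evi[OF assms])
  have grid_diff: "((\<lambda>\<tau>. real (nat \<lfloor>t / \<tau>\<rfloor>) * \<tau> - real (nat \<lfloor>s / \<tau>\<rfloor>) * \<tau>) \<longlongrightarrow> t - s) (at 0 within T)"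
    using assms by (intro tendsto_diff tendsto_grid) auto
  have "((\<lambda>\<tau>. (real (nat \<lfloor>t / \<tau>\<rfloor>) * \<tau> - real (nat \<lfloor>s / \<tau>\<rfloor>) * \<tau>) * F \<xi> + \<tau>\<^sup>2 * C)
      \<longlongrightarrow> (t - s) * F \<xi> + 0\<^sup>2 * C) (at 0 within T)"
    by (rule tendsto_add[OF tendsto_mult[OF grid_diff tendsto_const]
          tendsto_mult[OF tendsto_power[OF tendsto_ident_at] tendsto_const]])
  moreover have "((\<lambda>\<tau>. (Q (X \<tau> (nat \<lfloor>t / \<tau>\<rfloor>)) - Q (X \<tau> (nat \<lfloor>s / \<tau>\<rfloor>))) / 2
      + \<tau> * (\<Sum>n = nat \<lfloor>s / \<tau>\<rfloor>..<nat \<lfloor>t / \<tau>\<rfloor>. (evi_integrand \<xi> (X \<tau> n) + evi_integrand \<xi> (X \<tau> (Suc n))) / 2))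
      \<longlongrightarrow> (Q (Xlim t) - Q (Xlim s)) / 2 + integral {s..t} (\<lambda>a. evi_integrand \<xi> (Xlim a))) (at 0 within T)"
    using assms cont
    by (intro tendsto_add tendsto_divide tendsto_diff tendsto_const tendsto_at_grid_point
        tendsto_riemann_sum) auto
  ultimately have "(Q (Xlim t) - Q (Xlim s)) / 2 + integral {s..t} (\<lambda>a. evi_integrand \<xi> (Xlim a))
      \<le> (t - s) * F \<xi> + 0\<^sup>2 * C"
    using discrete by (rule tendsto_le[OF at_within_T_nontrivial])
  then show ?thesis
    using integral_evi_integrand[OF assms] by (simp add: Q_def algebra_simps)
qed

end

theorem mainTheorem14:
  fixes \<rho>0 :: "'a::euclidean_space measure"
    and \<phi> :: "'a measure \<Rightarrow> real"
    and grad :: "('a \<Rightarrow> 'a) \<Rightarrow> ('a \<Rightarrow> 'a)"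
    and lam :: real
    and T :: "real set"
    and X :: "real \<Rightarrow> nat \<Rightarrow> ('a \<Rightarrow> 'a)"
    and Xlim :: "real \<Rightarrow> ('a \<Rightarrow> 'a)"
  assumes rho0: "\<rho>0 \<in> P2"
    and grad: "H_frechet_gradient \<rho>0 (lift \<phi> \<rho>0) grad"
    and convex: "H_lambda_convex \<rho>0 lam (lift \<phi> \<rho>0)"
    and bdd: "bdd_below (lift \<phi> \<rho>0 ` Hsp \<rho>0)"
    and T_pos: "T \<subseteq> {0<..}"
    and T_lim: "0 islimpt T"
    and tau1: "\<And>\<tau>. \<tau> \<in> T \<Longrightarrow> lam / 2 + 1 / \<tau> > 0"
    and tau2: "\<And>\<tau>. \<tau> \<in> T \<Longrightarrow> lam < 0 \<Longrightarrow> \<bar>lam\<bar> * \<tau> < 1"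
    and X0: "\<And>\<tau>. \<tau> \<in> T \<Longrightarrow> X \<tau> 0 \<in> Hsp \<rho>0"
    and step: "\<And>\<tau> n. \<tau> \<in> T \<Longrightarrow> X \<tau> (Suc n) \<in> Hsp \<rho>0 \<and>
                 (\<forall>\<xi>\<in>Hsp \<rho>0. scheme_obj \<rho>0 (lift \<phi> \<rho>0) grad \<tau> (X \<tau> n) (X \<tau> (Suc n))
                                 \<le> scheme_obj \<rho>0 (lift \<phi> \<rho>0) grad \<tau> (X \<tau> n) \<xi>)"
    and X0_lim: "((\<lambda>\<tau>. Hnorm \<rho>0 (\<lambda>x. X \<tau> 0 x - x)) \<longlongrightarrow> 0) (at 0 within T)"
    and X0_grad: "bdd_above ((\<lambda>\<tau>. Hnorm \<rho>0 (grad (X \<tau> 0))) ` T)"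
    and Xlim_H: "\<And>t. t \<ge> 0 \<Longrightarrow> Xlim t \<in> Hsp \<rho>0"
    and Xlim_lip: "\<And>S. \<exists>L. \<forall>s\<in>{0..S}. \<forall>t\<in>{0..S}.
                      Hnorm \<rho>0 (\<lambda>x. Xlim t x - Xlim s x) \<le> L * \<bar>t - s\<bar>"
    and conv: "\<And>S \<epsilon>. \<epsilon> > 0 \<Longrightarrow> \<forall>\<^sub>F \<tau> in at 0 within T. \<forall>t\<in>{0..S}.
                  Hnorm \<rho>0 (\<lambda>x. X \<tau> (nat \<lfloor>t / \<tau>\<rfloor>) x - Xlim t x) \<le> \<epsilon>"
    and st: "0 \<le> s" "s \<le> t"
    and xi: "\<xi> \<in> Hsp \<rho>0"
  shows "((Hnorm \<rho>0 (\<lambda>x. Xlim t x - \<xi> x))\<^sup>2 - (Hnorm \<rho>0 (\<lambda>x. Xlim s x - \<xi> x))\<^sup>2) / 2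
          + lam / 2 * integral {s..t} (\<lambda>a. (Hnorm \<rho>0 (\<lambda>x. Xlim a x - \<xi> x))\<^sup>2)
          + integral {s..t} (\<lambda>a. lift \<phi> \<rho>0 (Xlim a))
         \<le> (t - s) * lift \<phi> \<rho>0 \<xi>"
proof -
  \<comment> \<open>The minimisers are given.\<close>
  interpret minimizing_movement_limit \<rho>0 "lift \<phi> \<rho>0" grad lam T X Xlim
    using grad convex T_pos T_lim X0 step X0_grad Xlim_H Xlim_lip conv by unfold_locales auto
  show ?thesis
    using integrated_evi[OF st xi] .
qed

end
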